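(* Let $(\Omega,\mu)$ be a probability space and $T:\Omega\to\Omega$ an ergodic measure-preserving map. Let $a:\mathbb{N}\times\Omega\to\mathbb{R}$ be a measurable function with $a(0,\omega)\equiv 0$ such that $a(n+m,\omega)\leq a(n,\omega)+a(m,T^n\omega)$ for all integers $n,m>0$ and a.e. $\omega$, and such that $\omega\mapsto a(1,\omega)$ is integrable. Let $A=\inf_n \frac{1}{n}\int_\Omega a(n,\omega)\,d\mu$ and assume $A$ is finite. Then for almost every $\omega$ there are integers $n_i=n_i(\omega)\to\infty$ and positive real numbers $\delta_\ell=\delta_\ell(\omega)\to 0$ such that for every $i$ and every $\ell\leq n_i$, $$\left|a(n_i,\omega)-a(n_i-\ell,T^\ell\omega)-A\ell\right|\leq \ell\,\delta_\ell(\omega).$$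
   Context: A function $a$ as in the claim is called an integrable subadditive cocycle; $A$ is its asymptotic average. *)

theory Defs
  imports "HOL-Probability.Probability"
begin

definition mpt :: "'a measure \<Rightarrow> ('a \<Rightarrow> 'a) \<Rightarrow> bool" where
  "mpt M T \<longleftrightarrow> T \<in> measurable M M \<and>
     (\<forall>B\<in>sets M. emeasure M (T -` B \<inter> space M) = emeasure M B)"

definition ergodic_mpt :: "'a measure \<Rightarrow> ('a \<Rightarrow> 'a) \<Rightarrow> bool" where
  "ergodic_mpt M T \<longleftrightarrow> mpt M T \<and>
     (\<forall>B\<in>sets M. T -` B \<inter> space M = B \<longrightarrow> measure M B = 0 \<or> measure M B = 1)"

text \<open>Extended-valued Lebesgue integral: integral of positive part minus integral of
  negative part (in the extended reals), as used for possibly non-integrable functions.\<close>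
definition ext_integral :: "'a measure \<Rightarrow> ('a \<Rightarrow> real) \<Rightarrow> ereal" where
  "ext_integral M f =
     enn2ereal (\<integral>\<^sup>+ x. ennreal (f x) \<partial>M) - enn2ereal (\<integral>\<^sup>+ x. ennreal (- f x) \<partial>M)"

end

theory Submission
  imports Defs
begin

text \<open>Write \<open>b n = a n - A n\<close> (\<open>centered\<close> below), a subadditive cocycle with \<open>inf (\<integral> b n) / n = 0\<close>. Kingman's theorem
  gives \<open>b n = o(n)\<close> almost everywhere: the lower bound from a telescoping argument along the orbit
  combined with ergodicity, the upper bound from block averages and Birkhoff's theorem (itself the
  additive case of the lower bound). Since \<open>b n(\<omega>) - b (n - l)(T\<^sup>l \<omega>) \<le> b l(\<omega>)\<close>, only the lower
  estimate \<open>b (n - l)(T\<^sup>l \<omega>) \<le> b n(\<omega>) + \<epsilon> l\<close> for all \<open>L \<le> l \<le> n\<close> is missing: call such \<open>n\<close>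
  good. Telescoping along the orbit, jumping over the bad times, and integrating shows that bad times
  have density at most \<open>\<rho>\<close> when \<open>L\<close> is large. Hence, for \<open>\<epsilon> = 1 / (j + 1)\<close> with suitable scales
  \<open>L j\<close>, almost every point has, for each \<open>k\<close>, infinitely many times that are good for all \<open>j \<le> k\<close>
  at once; a diagonal sequence of such times yields \<open>n\<^sub>i\<close> and the rate \<open>\<delta>\<close>.\<close>

lemma funpow_apply_add: "(f ^^ n) ((f ^^ m) x) = (f ^^ (n + m)) x"
  by (simp add: funpow_add)

lemma telescoping_descent:
  fixes D h :: "nat \<Rightarrow> real"
  assumes step: "\<And>u. u \<in> R \<Longrightarrow> u < N \<Longrightarrow>
      \<exists>u'. u < u' \<and> u' \<le> N \<and> (u' < N \<longrightarrow> u' \<in> R) \<and> D u - D u' \<le> (\<Sum>v\<in>{u..<u'}. h v)"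
    and "u \<in> R" "u \<le> N"
  shows "D u - D N \<le> (\<Sum>v\<in>{u..<N}. h v)"
  using assms(2,3)
proof (induction "N - u" arbitrary: u rule: less_induct)
  case less
  show ?case
  proof (cases "u = N")
    case False
    with less.prems obtain u' where u': "u < u'" "u' \<le> N" "u' < N \<longrightarrow> u' \<in> R"
      "D u - D u' \<le> (\<Sum>v\<in>{u..<u'}. h v)" using step by force
    have "D u' - D N \<le> (\<Sum>v\<in>{u'..<N}. h v)"
      using less.hyps[of u'] u' by (cases "u' = N") auto
    moreover have "(\<Sum>v\<in>{u..<N}. h v) = (\<Sum>v\<in>{u..<u'}. h v) + (\<Sum>v\<in>{u'..<N}. h v)"
      using u' by (simp add: sum.atLeastLessThan_concat)
    ultimately show ?thesis using u'(4) by linarith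
  qed simp
qed

lemma sum_lessThan_tail_le:
  fixes C :: real
  assumes "0 \<le> C"
  shows "(\<Sum>v<N. if N < v + K then C else 0) \<le> real K * C"
proof -
  have "(\<Sum>v<N. if N < v + K then C else 0) = real (card {v\<in>{..<N}. N < v + K}) * C"
    by (simp add: sum.inter_filter[symmetric])
  also have "card {v\<in>{..<N}. N < v + K} \<le> card {N - K..<N}"
    by (intro card_mono) auto
  then have "real (card {v\<in>{..<N}. N < v + K}) * C \<le> real K * C"
    using assms by (intro mult_right_mono) auto
  finally show ?thesis .
qed

lemma sum_lessThan_if_less:
  fixes f :: "nat \<Rightarrow> real"
  assumes "j \<le> n"
  shows "(\<Sum>v<n. if v < j then f v else 0) = (\<Sum>v<j. f v)"
proof -
  have "{v\<in>{..<n}. v < j} = {..<j}" using assms by auto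
  then show ?thesis by (simp add: sum.inter_filter[symmetric])
qed

lemma sum_lessThan_add_split:
  fixes f :: "nat \<Rightarrow> real"
  shows "(\<Sum>v<n+m. f v) = (\<Sum>v<n. f v) + (\<Sum>v<m. f (v + n))"
  by (induction m) (auto simp: add.commute add.left_commute)

lemma sum_lessThan_if_add_le:
  fixes g :: "nat \<Rightarrow> real"
  assumes "1 \<le> k" "k \<le> n"
  shows "(\<Sum>v<n. if v + k \<le> n then g v else 0) = (\<Sum>v<n - k + 1. g v)"
proof -
  have "(\<Sum>v<n. if v + k \<le> n then g v else 0) = (\<Sum>v<n. if v < n - k + 1 then g v else 0)"
    using assms by (intro sum.cong) auto
  also have "\<dots> = (\<Sum>v<n - k + 1. g v)" using assms by (intro sum_lessThan_if_less) auto
  finally show ?thesis .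
qed

lemma sum_boundary_le:
  fixes f :: "nat \<Rightarrow> real"
  assumes tail: "\<And>v. m \<le> v \<Longrightarrow> f v \<le> \<eta> * real v" and \<eta>: "0 \<le> \<eta>" and n: "m + k \<le> n"
  shows "(\<Sum>v<n. if v < k \<or> n < v + k then f v else 0) \<le> (\<Sum>v<k. f v) + real k * (\<eta> * real n)"
proof -
  have "(\<Sum>v<n. if v < k \<or> n < v + k then f v else 0)
      \<le> (\<Sum>v<n. (if v < k then f v else 0) + (if n < v + k then \<eta> * real n else 0))"
  proof (intro sum_mono)
    fix v assume "v \<in> {..<n}"
    have "f v \<le> \<eta> * real n" if "n < v + k"
      using tail[of v] mult_left_mono[of "real v" "real n" \<eta>] that n \<eta> \<open>v \<in> {..<n}\<close> by auto
    then show "(if v < k \<or> n < v + k then f v else 0)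
        \<le> (if v < k then f v else 0) + (if n < v + k then \<eta> * real n else 0)"
      using \<eta> by auto
  qed
  also have "\<dots> \<le> (\<Sum>v<k. f v) + real k * (\<eta> * real n)"
    using sum_lessThan_if_less[of k n f] sum_lessThan_tail_le[of "\<eta> * real n" n k] n \<eta>
    by (simp add: sum.distrib)
  finally show ?thesis .
qed

lemma sum_lessThan_le_sum_reverse:
  fixes f :: "nat \<Rightarrow> real"
  assumes "\<And>n. 0 \<le> f n" "f 0 = 0"
  shows "(\<Sum>n<N. f n) \<le> (\<Sum>v<N. f (N - v))"
proof -
  have "(\<Sum>v<N. f (N - v)) = (\<Sum>v<N. f (Suc (N - Suc v)))"
    by (intro sum.cong) (auto simp: Suc_diff_Suc)
  also have "\<dots> = (\<Sum>n<Suc N. f n)"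
    using assms(2) by (simp only: sum.nat_diff_reindex[of "\<lambda>i. f (Suc i)"] sum.lessThan_Suc_shift)
  also have "(\<Sum>n<N. f n) \<le> \<dots>" using assms(1) by simp
  finally show ?thesis .
qed

lemma sum_inverse_powers_two_le: "(\<Sum>j\<le>k. (1::real) / 2 ^ Suc j) \<le> 1"
proof -
  have "(\<Sum>j\<le>k. (1::real) / 2 ^ Suc j) = 1 - 1 / 2 ^ Suc k"
    by (induction k) (auto simp: field_simps)
  then show ?thesis by simp
qed

lemma integral_tendsto_zero_dominated:
  fixes g :: "nat \<Rightarrow> 'a \<Rightarrow> real" and w :: "'a \<Rightarrow> real"
  assumes [measurable]: "\<And>K. g K \<in> borel_measurable M" and "integrable M w"
    and "AE x in M. eventually (\<lambda>K. g K x = 0) sequentially"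
    and "\<And>K x. \<bar>g K x\<bar> \<le> w x"
  shows "(\<lambda>K. integral\<^sup>L M (g K)) \<longlonglongrightarrow> 0"
proof -
  have "(\<lambda>K. integral\<^sup>L M (g K)) \<longlonglongrightarrow> integral\<^sup>L M (\<lambda>x. 0)"
  proof (rule integral_dominated_convergence[where w=w])
    show "AE x in M. (\<lambda>K. g K x) \<longlonglongrightarrow> 0"
      using assms(3) by eventually_elim (rule tendsto_eventually)
  qed (use assms in auto)
  then show ?thesis by simp
qed

lemma ext_integral_eq_integral:
  fixes f :: "'a \<Rightarrow> real"
  assumes "integrable M f"
  shows "ext_integral M f = ereal (integral\<^sup>L M f)"
proof -
  have X: "(\<integral>\<^sup>+ x. ennreal (f x) \<partial>M) \<noteq> \<infinity>" and Y: "(\<integral>\<^sup>+ x. ennreal (- f x) \<partial>M) \<noteq> \<infinity>"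
    using assms by auto
  obtain r where r: "(\<integral>\<^sup>+ x. ennreal (f x) \<partial>M) = ennreal r" "0 \<le> r"
    using X by (cases "(\<integral>\<^sup>+ x. ennreal (f x) \<partial>M)") auto
  obtain s where s: "(\<integral>\<^sup>+ x. ennreal (- f x) \<partial>M) = ennreal s" "0 \<le> s"
    using Y by (cases "(\<integral>\<^sup>+ x. ennreal (- f x) \<partial>M)") auto
  show ?thesis
    unfolding ext_integral_def real_lebesgue_integral_def[OF assms] r s using r(2) s(2) by simp
qed

lemma ext_integral_le_integral:
  fixes f g :: "'a \<Rightarrow> real"
  assumes "integrable M g" "AE x in M. f x \<le> g x"
  shows "ext_integral M f \<le> ereal (integral\<^sup>L M g)"
proof -
  have "(\<integral>\<^sup>+ x. ennreal (f x) \<partial>M) \<le> (\<integral>\<^sup>+ x. ennreal (g x) \<partial>M)"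
    using assms(2) by (intro nn_integral_mono_AE) (auto intro: ennreal_leI)
  moreover have "(\<integral>\<^sup>+ x. ennreal (- g x) \<partial>M) \<le> (\<integral>\<^sup>+ x. ennreal (- f x) \<partial>M)"
    using assms(2) by (intro nn_integral_mono_AE) (auto intro!: ennreal_leI)
  ultimately have "ext_integral M f \<le> ext_integral M g"
    unfolding ext_integral_def by (intro ereal_minus_mono) (auto simp: less_eq_ennreal.rep_eq)
  then show ?thesis using ext_integral_eq_integral[OF assms(1)] by simp
qed

lemma integrable_if_ext_integral_finite:
  fixes f g :: "'a \<Rightarrow> real"
  assumes f: "f \<in> borel_measurable M" and g: "integrable M g" and le: "AE x in M. f x \<le> g x"
    and fin: "ext_integral M f \<noteq> - \<infinity>"
  shows "integrable M f"
proof -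
  have "(\<integral>\<^sup>+ x. ennreal (f x) \<partial>M) \<le> (\<integral>\<^sup>+ x. ennreal (g x) \<partial>M)"
    using le by (intro nn_integral_mono_AE) (auto intro: ennreal_leI)
  moreover have "(\<integral>\<^sup>+ x. ennreal (g x) \<partial>M) \<noteq> \<infinity>" using g by auto
  ultimately have X: "(\<integral>\<^sup>+ x. ennreal (f x) \<partial>M) \<noteq> \<infinity>" by (auto simp: top_unique)
  then obtain r where r: "(\<integral>\<^sup>+ x. ennreal (f x) \<partial>M) = ennreal r" "0 \<le> r"
    by (cases "(\<integral>\<^sup>+ x. ennreal (f x) \<partial>M)") auto
  have Y: "(\<integral>\<^sup>+ x. ennreal (- f x) \<partial>M) \<noteq> \<infinity>"
  proof
    assume "(\<integral>\<^sup>+ x. ennreal (- f x) \<partial>M) = \<infinity>"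
    then have "ext_integral M f = - \<infinity>" unfolding ext_integral_def r using r(2) by simp
    then show False using fin by simp
  qed
  show ?thesis unfolding real_integrable_def using f X Y by auto
qed

context prob_space
begin

lemma frequently_prob_ge_of_density:
  fixes A :: "nat \<Rightarrow> 'a set"
  assumes A: "\<And>n. A n \<in> events" and \<rho>: "\<rho> > 0"
    and density: "\<And>N. (\<Sum>n<N. prob (space M - A n)) \<le> \<rho> * real N + B"
  shows "\<exists>n\<ge>m. 1 - 2 * \<rho> \<le> prob (A n)"
proof (rule ccontr)
  assume "\<not> (\<exists>n\<ge>m. 1 - 2 * \<rho> \<le> prob (A n))"
  then have large: "2 * \<rho> \<le> prob (space M - A n)" if "n \<ge> m" for n
    using that prob_compl[OF A] by force
  define N where "N = 2 * m + nat \<lceil>B / \<rho>\<rceil> + 1"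
  have "(\<Sum>n\<in>{m..<N}. 2 * \<rho>) \<le> (\<Sum>n\<in>{m..<N}. prob (space M - A n))"
    using large by (intro sum_mono) auto
  also have "\<dots> \<le> (\<Sum>n<N. prob (space M - A n))"
    by (intro sum_mono2) auto
  also have "\<dots> \<le> \<rho> * real N + B" by (rule density)
  finally have "real (N - m) * (2 * \<rho>) \<le> \<rho> * real N + B" by simp
  moreover have "B < \<rho> * (real (nat \<lceil>B / \<rho>\<rceil>) + 1)"
    using \<rho> real_nat_ceiling_ge[of "B / \<rho>"] by (simp add: field_simps)
  ultimately show False using \<rho> unfolding N_def by (simp add: of_nat_diff algebra_simps)
qed

lemma prob_limsup_ge:
  fixes A :: "nat \<Rightarrow> nat \<Rightarrow> 'a set"
  assumes A: "\<And>k n. A k n \<in> events" and mono: "\<And>k n. A (Suc k) n \<subseteq> A k n"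
    and freq: "\<And>k m. \<exists>n\<ge>m. \<alpha> \<le> prob (A k n)"
  shows "\<alpha> \<le> prob (\<Inter>k. \<Inter>m. \<Union>n\<in>{m..}. A k n)"
proof -
  define U where "U k m = (\<Union>n\<in>{m..}. A k n)" for k m
  have U[measurable]: "U k m \<in> events" for k m
    unfolding U_def using A by (intro sets.countable_UN') (auto intro: countableI_type)
  have "\<alpha> \<le> prob (U k m)" for k m
  proof -
    obtain n where "n \<ge> m" "\<alpha> \<le> prob (A k n)" using freq by blast
    moreover have "prob (A k n) \<le> prob (U k m)"
      using \<open>n \<ge> m\<close> U by (intro finite_measure_mono) (auto simp: U_def)
    ultimately show ?thesis by linarith
  qed
  moreover have "decseq (U k)" for k
    by (intro decseq_SucI) (auto simp: U_def intro: Suc_leD)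
  ultimately have W: "\<alpha> \<le> prob (\<Inter>m. U k m)" for k
    by (intro LIMSEQ_le_const[OF finite_Lim_measure_decseq]) auto
  have "decseq (\<lambda>k. \<Inter>m. U k m)"
    using mono by (intro decseq_SucI) (auto simp: U_def, blast)
  then have "\<alpha> \<le> prob (\<Inter>k. \<Inter>m. U k m)"
    using W by (intro LIMSEQ_le_const[OF finite_Lim_measure_decseq]) auto
  then show ?thesis by (simp add: U_def)
qed

end

lemma obtain_diagonal_times:
  fixes Q :: "nat \<Rightarrow> nat \<Rightarrow> bool"
  assumes Q: "\<And>k m. \<exists>n\<ge>m. \<forall>j\<le>k. Q j n"
  obtains ni where "strict_mono ni" "\<And>i j. j \<le> i \<Longrightarrow> Q j (ni i)" "\<And>i. m0 \<le> ni i"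
proof -
  define P where "P k m n \<longleftrightarrow> n \<ge> m \<and> (\<forall>j\<le>k. Q j n)" for k m n
  have P: "P k m (SOME n. P k m n)" for k m
    using Q[where k=k and m=m] unfolding P_def by (rule someI_ex)
  define ni where
    "ni = rec_nat (SOME n. P 0 m0 n) (\<lambda>i prev. SOME n. P (Suc i) (max (Suc prev) m0) n)"
  have ni0: "P 0 m0 (ni 0)" and niS: "P (Suc i) (max (Suc (ni i)) m0) (ni (Suc i))" for i
    unfolding ni_def using P by simp_all
  have ni: "P i m0 (ni i)" for i
    using ni0 niS[of "i - 1"] unfolding P_def by (cases i) auto
  have ni_less: "ni i < ni (Suc i)" for i
    using niS[of i] unfolding P_def by simp
  show thesis
  proof
    show "strict_mono ni" by (intro strict_monoI_Suc ni_less)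
  qed (use ni in \<open>auto simp: P_def\<close>)
qed

text \<open>A family of errors that is bounded for each \<open>l\<close> and \<open>o(l)\<close> uniformly in \<open>i\<close> admits a single
  rate \<open>\<delta> l \<rightarrow> 0\<close>; the rate is the normalized supremum, padded to stay positive.\<close>
lemma sublinear_error_rate:
  fixes e :: "nat \<Rightarrow> 'i \<Rightarrow> real" and I :: "nat \<Rightarrow> 'i set"
  assumes bdd: "\<And>l. \<exists>B. \<forall>i\<in>I l. e l i \<le> B"
    and zero: "\<And>i. i \<in> I 0 \<Longrightarrow> e 0 i \<le> 0"
    and small: "\<And>\<eta>. \<eta> > 0 \<Longrightarrow> \<exists>L. \<forall>l\<ge>L. \<forall>i\<in>I l. e l i \<le> \<eta> * real l"
  shows "\<exists>\<delta>. (\<forall>l. \<delta> l > 0) \<and> \<delta> \<longlonglongrightarrow> 0 \<and> (\<forall>l. \<forall>i\<in>I l. e l i \<le> real l * \<delta> l)"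
proof -
  define S where "S l = Sup (insert 0 (e l ` I l))" for l
  have bdd_S: "bdd_above (insert 0 (e l ` I l))" for l
  proof -
    obtain B where "\<forall>i\<in>I l. e l i \<le> B" using bdd by blast
    then show ?thesis by (intro bdd_aboveI[of _ "max B 0"]) force
  qed
  have e_S: "e l i \<le> S l" if "i \<in> I l" for l i
    unfolding S_def using that bdd_S by (intro cSup_upper) auto
  have S_nonneg: "0 \<le> S l" for l
    unfolding S_def using bdd_S by (intro cSup_upper) auto
  define \<delta> where "\<delta> l = (if l = 0 then 1 else 1 / (real l + 1) + S l / real l)" for l
  have \<delta>_pos: "\<delta> l > 0" for l
    using S_nonneg[of l] by (simp add: \<delta>_def add_pos_nonneg)
  have "e l i \<le> real l * \<delta> l" if "i \<in> I l" for l i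
  proof (cases "l = 0")
    case False
    then have "real l * \<delta> l = real l / (real l + 1) + S l" by (simp add: \<delta>_def distrib_left)
    then have "S l \<le> real l * \<delta> l" by simp
    then show ?thesis using e_S[OF that] by linarith
  qed (use zero that in simp)
  moreover have "\<delta> \<longlonglongrightarrow> 0"
  proof (rule LIMSEQ_I)
    fix r :: real assume r: "r > 0"
    obtain L where L: "\<forall>l\<ge>L. \<forall>i\<in>I l. e l i \<le> r / 2 * real l" using small[of "r / 2"] r by auto
    obtain L' :: nat where L': "2 / r < real L'" using reals_Archimedean2 by blast
    have "norm (\<delta> l - 0) < r" if l: "l \<ge> max (max L L') 1" for l
    proof -
      have "S l \<le> r / 2 * real l"
        unfolding S_def using L l r by (intro cSup_least) auto
      then have "S l / real l \<le> r / 2" using l by (simp add: divide_le_eq)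
      moreover have "2 / r < real l + 1" using L' l by linarith
      then have "1 / (real l + 1) < r / 2" using r by (simp add: field_simps)
      moreover have "\<delta> l = 1 / (real l + 1) + S l / real l" using l by (simp add: \<delta>_def)
      ultimately have "\<delta> l < r" by linarith
      then show ?thesis using \<delta>_pos[of l] by simp
    qed
    then show "\<exists>no. \<forall>n\<ge>no. norm (\<delta> n - 0) < r" by blast
  qed
  ultimately show ?thesis using \<delta>_pos by blast
qed

locale ergodic_system = prob_space M for M :: "'a measure" +
  fixes T :: "'a \<Rightarrow> 'a"
  assumes ergodic: "ergodic_mpt M T"
begin

lemma measurable_T[measurable]: "T \<in> M \<rightarrow>\<^sub>M M"
  using ergodic unfolding ergodic_mpt_def mpt_def by auto

lemma measurable_funpow_T[measurable]: "(T ^^ n) \<in> M \<rightarrow>\<^sub>M M"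
proof (induction n)
  case (Suc n)
  then show ?case using measurable_T by (metis funpow.simps(2) measurable_comp)
qed simp

lemma funpow_T_in_space[simp]: "x \<in> space M \<Longrightarrow> (T ^^ n) x \<in> space M"
  by (rule measurable_space[OF measurable_funpow_T])

lemma distr_T: "distr M M T = M"
proof (rule measure_eqI)
  fix B assume "B \<in> sets (distr M M T)"
  then show "emeasure (distr M M T) B = emeasure M B"
    using ergodic unfolding ergodic_mpt_def mpt_def by (simp add: emeasure_distr)
qed simp

lemma distr_funpow_T: "distr M M (T ^^ n) = M"
proof (induction n)
  case (Suc n)
  have "distr M M (T ^^ Suc n) = distr (distr M M (T ^^ n)) M T"
    by (simp add: distr_distr)
  also have "\<dots> = M" using Suc distr_T by simp
  finally show ?case .
qed simp

lemma AE_funpow_T: "AE x in M. P x \<Longrightarrow> AE x in M. P ((T ^^ n) x)"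
  using AE_distrD[OF measurable_funpow_T, of P n] distr_funpow_T by metis

lemma measure_funpow_T_vimage:
  "B \<in> sets M \<Longrightarrow> measure M ((T ^^ n) -` B \<inter> space M) = measure M B"
  by (metis measurable_funpow_T distr_funpow_T measure_distr)

lemma integral_funpow_T:
  fixes g :: "'a \<Rightarrow> real"
  assumes "g \<in> borel_measurable M"
  shows "integral\<^sup>L M (\<lambda>x. g ((T ^^ n) x)) = integral\<^sup>L M g"
  by (metis assms measurable_funpow_T distr_funpow_T integral_distr)

lemma integrable_funpow_T:
  fixes g :: "'a \<Rightarrow> real"
  assumes "integrable M g"
  shows "integrable M (\<lambda>x. g ((T ^^ n) x))"
  using assms integrable_distr_eq[OF measurable_funpow_T, of g n] by (simp add: distr_funpow_T)

lemma AE_funpow_T_vimage_iff: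
  assumes "AE x in M. T x \<in> B \<longrightarrow> x \<in> B" and B: "B \<in> sets M"
  shows "AE x in M. (T ^^ n) x \<in> B \<longleftrightarrow> x \<in> B"
proof (induction n)
  case (Suc n)
  define P where "P k = (T ^^ k) -` B \<inter> space M" for k
  have [measurable]: "P k \<in> sets M" for k unfolding P_def using B by measurable
  have measure_P: "measure M (P k) = measure M B" for k
    unfolding P_def by (rule measure_funpow_T_vimage[OF B])
  have sub: "AE x in M. x \<in> P (Suc n) \<longrightarrow> x \<in> P n"
    using AE_funpow_T[OF assms(1), of n] by eventually_elim (auto simp: P_def)
  then have "measure M (P (Suc n) \<inter> P n) = measure M (P (Suc n))"
    by (intro measure_eq_AE) auto
  then have "measure M (P n - P (Suc n)) = 0"
    using measure_P finite_measure_Diff'[of "P n" "P (Suc n)"] by (simp add: Int_commute)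
  then have "AE x in M. x \<notin> P n - P (Suc n)"
    by (intro AE_not_in) (auto simp: measure_eq_0_null_sets emeasure_eq_measure)
  with sub Suc AE_space show ?case by eventually_elim (auto simp: P_def)
qed simp

text \<open>An a.e. sub-invariant set is trivial: the points whose orbit visits \<open>B\<close> infinitely often
  form an exactly invariant set that agrees with \<open>B\<close> almost everywhere.\<close>
lemma ergodic_subinvariant_trivial:
  assumes B: "B \<in> sets M" and sub: "AE x in M. T x \<in> B \<longrightarrow> x \<in> B"
  shows "measure M B = 0 \<or> measure M B = 1"
proof -
  define C where "C = {x \<in> space M. \<forall>m. \<exists>n\<ge>m. (T ^^ n) x \<in> B}"
  have C: "C \<in> sets M" unfolding C_def using B by measurable
  have "AE x in M. \<forall>n. (T ^^ n) x \<in> B \<longleftrightarrow> x \<in> B"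
    using AE_funpow_T_vimage_iff[OF sub B] by (simp add: AE_all_countable)
  then have "AE x in M. x \<in> C \<longleftrightarrow> x \<in> B"
    using AE_space by eventually_elim (auto simp: C_def)
  then have "measure M C = measure M B" using C B by (intro measure_eq_AE) auto
  moreover have "T -` C \<inter> space M = C"
  proof -
    have shift: "(T ^^ n) (T x) = (T ^^ Suc n) x" for n x by (simp add: funpow_swap1)
    have "(\<exists>n\<ge>m. (T ^^ n) (T x) \<in> B) \<longleftrightarrow> (\<exists>n\<ge>Suc m. (T ^^ n) x \<in> B)" for x m
      unfolding shift by (metis Suc_le_D Suc_le_mono)
    then have "(\<forall>m. \<exists>n\<ge>m. (T ^^ n) (T x) \<in> B) \<longleftrightarrow> (\<forall>m. \<exists>n\<ge>m. (T ^^ n) x \<in> B)" for x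
      by (meson Suc_leD le_SucI)
    then show ?thesis using measurable_space[OF measurable_T] by (auto simp: C_def)
  qed
  ultimately show ?thesis using ergodic C unfolding ergodic_mpt_def by metis
qed

end

text \<open>The last hypothesis says that \<open>\<integral> c N \<ge> 0\<close>, phrased so that it makes sense
  before the integrability of \<open>c N\<close> is known.\<close>
locale subadditive_cocycle = ergodic_system +
  fixes c :: "nat \<Rightarrow> 'a \<Rightarrow> real"
  assumes measurable_c[measurable]: "\<And>n. c n \<in> borel_measurable M"
    and c_zero: "\<And>x. x \<in> space M \<Longrightarrow> c 0 x = 0"
    and c_subadditive:
      "\<And>n m. n > 0 \<Longrightarrow> m > 0 \<Longrightarrow> AE x in M. c (n + m) x \<le> c n x + c m ((T ^^ n) x)"
    and integrable_c_one: "integrable M (c 1)"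
    and integral_dominating_nonneg:
      "\<And>N F. integrable M F \<Longrightarrow> AE x in M. c N x \<le> F x \<Longrightarrow> 0 \<le> integral\<^sup>L M F"
begin

definition orbit_subadditive :: "'a set" where
  "orbit_subadditive = {x \<in> space M. \<forall>u n m.
     c (n + m) ((T ^^ u) x) \<le> c n ((T ^^ u) x) + c m ((T ^^ (n + u)) x)}"

lemma AE_orbit_subadditive: "AE x in M. x \<in> orbit_subadditive"
proof -
  have "AE x in M. c (n + m) ((T ^^ u) x) \<le> c n ((T ^^ u) x) + c m ((T ^^ (n + u)) x)" for u n m
  proof (cases "n = 0 \<or> m = 0")
    case False
    then show ?thesis
      using AE_funpow_T[OF c_subadditive[of n m], of u] by (simp add: funpow_apply_add)
  qed (auto intro!: AE_I2 simp: c_zero)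
  then show ?thesis by (simp add: AE_all_countable orbit_subadditive_def)
qed

lemma orbit_subadditive_in_space: "x \<in> orbit_subadditive \<Longrightarrow> x \<in> space M"
  by (simp add: orbit_subadditive_def)

lemma orbit_subadditive_le:
  "x \<in> orbit_subadditive \<Longrightarrow>
     c (n + m) ((T ^^ u) x) \<le> c n ((T ^^ u) x) + c m ((T ^^ (n + u)) x)"
  by (simp add: orbit_subadditive_def)

lemma orbit_subadditive_split:
  assumes "x \<in> orbit_subadditive" "u \<le> u'" "u' \<le> N"
  shows "c (N - u) ((T ^^ u) x) \<le> c (u' - u) ((T ^^ u) x) + c (N - u') ((T ^^ u') x)"
  using orbit_subadditive_le[OF assms(1), of "u' - u" "N - u'" u] assms(2,3) by simp

lemma orbit_subadditive_le_sum_one: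
  assumes "x \<in> orbit_subadditive"
  shows "c n ((T ^^ u) x) \<le> (\<Sum>v\<in>{u..<u+n}. c 1 ((T ^^ v) x))"
proof (induction n arbitrary: u)
  case 0
  then show ?case using assms orbit_subadditive_in_space by (simp add: c_zero)
next
  case (Suc n)
  have "c (Suc n) ((T ^^ u) x) \<le> c 1 ((T ^^ u) x) + c n ((T ^^ (Suc u)) x)"
    using orbit_subadditive_le[OF assms, of 1 n u] by simp
  also have "\<dots> \<le> c 1 ((T ^^ u) x) + (\<Sum>v\<in>{Suc u..<Suc u+n}. c 1 ((T ^^ v) x))"
    using Suc[of "Suc u"] by simp
  also have "\<dots> = (\<Sum>v\<in>{u..<u + Suc n}. c 1 ((T ^^ v) x))"
    by (simp add: sum.atLeast_Suc_lessThan)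
  finally show ?case .
qed

definition c1_pos :: "'a \<Rightarrow> real" where "c1_pos x = max 0 (c 1 x)"

lemma integrable_c1_pos: "integrable M c1_pos"
  unfolding c1_pos_def by (intro integrable_max integrable_c_one) simp

lemma measurable_c1_pos[measurable]: "c1_pos \<in> borel_measurable M"
  using integrable_c1_pos by auto

lemma c1_pos_nonneg: "0 \<le> c1_pos x"
  by (simp add: c1_pos_def)

lemma c1_le_c1_pos: "c 1 x \<le> c1_pos x"
  by (simp add: c1_pos_def)

definition drop_set :: "real \<Rightarrow> nat \<Rightarrow> 'a set" where
  "drop_set \<theta> K = {y \<in> space M. \<exists>k\<in>{1..K}. c k y \<le> \<theta> * real k}"

lemma drop_set_sets[measurable]: "drop_set \<theta> K \<in> sets M"
  unfolding drop_set_def by measurable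

lemma tendsto_drop_set_complement:
  fixes w :: "'a \<Rightarrow> real"
  assumes "AE x in M. \<exists>n\<ge>1. c n x \<le> \<theta> * real n" and w: "integrable M w" "\<And>x. 0 \<le> w x"
  shows "(\<lambda>K. integral\<^sup>L M (\<lambda>x. w x * indicator (space M - drop_set \<theta> K) x)) \<longlonglongrightarrow> 0"
proof (rule integral_tendsto_zero_dominated[where w=w])
  show "AE x in M. \<forall>\<^sub>F K in sequentially. w x * indicator (space M - drop_set \<theta> K) x = 0"
    using assms(1) AE_space
  proof eventually_elim
    case (elim x)
    then obtain n where "n \<ge> 1" "c n x \<le> \<theta> * real n" by blast
    then have "x \<in> drop_set \<theta> K" if "K \<ge> n" for K
      using elim that unfolding drop_set_def by force
    then show ?case unfolding eventually_sequentially by (auto intro!: exI[of _ n])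
  qed
qed (use w in \<open>auto simp: indicator_def\<close>)

lemma integral_orbit_sum_nonneg:
  fixes h :: "nat \<Rightarrow> 'a \<Rightarrow> real"
  assumes h: "\<And>v. integrable M (h v)"
    and le: "\<And>x. x \<in> orbit_subadditive \<Longrightarrow> c N x \<le> (\<Sum>v<N. h v ((T ^^ v) x))"
  shows "0 \<le> (\<Sum>v<N. integral\<^sup>L M (h v))"
proof -
  define F where "F x = (\<Sum>v<N. h v ((T ^^ v) x))" for x
  have "integrable M F"
    unfolding F_def by (intro Bochner_Integration.integrable_sum integrable_funpow_T h)
  then have "0 \<le> integral\<^sup>L M F"
    by (rule integral_dominating_nonneg) (use AE_orbit_subadditive le in \<open>auto simp: F_def\<close>)
  also have "integral\<^sup>L M F = (\<Sum>v<N. integral\<^sup>L M (h v))"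
    unfolding F_def using h
    by (simp add: Bochner_Integration.integral_sum integrable_funpow_T integral_funpow_T)
  finally show ?thesis .
qed

text \<open>Telescoping along the orbit: a drop \<open>c k \<le> -\<eta> k\<close> that ends before \<open>N\<close> is jumped over at
  cost \<open>-\<eta>\<close> per step; any other step is a unit step, paid for by the last two terms of \<open>w\<close>.\<close>
lemma le_sum_outside_drop_set:
  fixes \<eta> :: real and K N :: nat
  defines "w v y \<equiv> - \<eta> + (\<eta> + c1_pos y) * indicator (space M - drop_set (- \<eta>) K) y
                     + (if N < v + K then c1_pos y + \<eta> else 0)"
  assumes x: "x \<in> orbit_subadditive" and \<eta>: "0 \<le> \<eta>"
  shows "c N x \<le> (\<Sum>v<N. w v ((T ^^ v) x))"
proof -
  define D where "D u = c (N - u) ((T ^^ u) x)" for u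
  have w_ge: "- \<eta> \<le> w v y" for v y
    using c1_pos_nonneg[of y] \<eta> unfolding w_def by (simp add: indicator_def)
  have "D 0 - D N \<le> (\<Sum>v\<in>{0..<N}. w v ((T ^^ v) x))"
  proof (rule telescoping_descent[where R=UNIV])
    fix u assume u: "u < N"
    let ?y = "(T ^^ u) x"
    show "\<exists>u'>u. u' \<le> N \<and> (u' < N \<longrightarrow> u' \<in> UNIV) \<and>
        D u - D u' \<le> (\<Sum>v\<in>{u..<u'}. w v ((T ^^ v) x))"
    proof (cases "?y \<in> drop_set (- \<eta>) K \<and> u + K \<le> N")
      case True
      then obtain k where k: "k \<in> {1..K}" "c k ?y \<le> - \<eta> * real k"
        by (auto simp: drop_set_def)
      have "D u \<le> c k ?y + D (u + k)"
        using orbit_subadditive_split[OF x, of u "u + k" N] k True by (simp add: D_def)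
      moreover have "(\<Sum>v\<in>{u..<u+k}. - \<eta>) \<le> (\<Sum>v\<in>{u..<u+k}. w v ((T ^^ v) x))"
        by (intro sum_mono w_ge)
      ultimately show ?thesis using k True by (intro exI[of _ "u + k"]) (auto simp: mult.commute)
    next
      case False
      have "D u \<le> c 1 ?y + D (u + 1)"
        using orbit_subadditive_split[OF x, of u "u + 1" N] u by (simp add: D_def)
      moreover have "c1_pos ?y \<le> w u ?y"
        using False c1_pos_nonneg[of ?y] \<eta> x orbit_subadditive_in_space
        by (auto simp: w_def indicator_def)
      ultimately show ?thesis using u c1_le_c1_pos[of ?y] by (intro exI[of _ "u + 1"]) auto
    qed
  qed auto
  moreover have "D N = 0" using x orbit_subadditive_in_space by (simp add: D_def c_zero)
  ultimately show ?thesis by (simp add: D_def atLeast0LessThan)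
qed

lemma not_AE_frequently_below:
  assumes \<eta>: "\<eta> > 0"
  shows "\<not> (AE x in M. \<forall>m. \<exists>n\<ge>m. c n x \<le> - \<eta> * real n)"
proof
  assume "AE x in M. \<forall>m. \<exists>n\<ge>m. c n x \<le> - \<eta> * real n"
  then have freq: "AE x in M. \<exists>n\<ge>1. c n x \<le> - \<eta> * real n"
    by eventually_elim blast
  define out where "out K = (indicator (space M - drop_set (- \<eta>) K) :: 'a \<Rightarrow> real)" for K
  have "eventually (\<lambda>K. integral\<^sup>L M (\<lambda>x. 1 * out K x) < 1/4) sequentially"
    using tendsto_drop_set_complement[OF freq, of "\<lambda>_. 1"]
    unfolding out_def by (intro order_tendstoD) auto
  moreover have "eventually (\<lambda>K. integral\<^sup>L M (\<lambda>x. c1_pos x * out K x) < \<eta>/4) sequentially"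
    using tendsto_drop_set_complement[OF freq integrable_c1_pos c1_pos_nonneg] \<eta>
    unfolding out_def by (intro order_tendstoD) auto
  ultimately have "eventually (\<lambda>K. integral\<^sup>L M (out K) < 1/4 \<and>
      integral\<^sup>L M (\<lambda>x. c1_pos x * out K x) < \<eta>/4) sequentially"
    by eventually_elim simp
  then obtain K where K: "integral\<^sup>L M (out K) < 1/4"
      "integral\<^sup>L M (\<lambda>x. c1_pos x * out K x) < \<eta>/4"
    using eventually_happens'[OF sequentially_bot] by blast
  define I where "I = integral\<^sup>L M c1_pos"
  have I: "0 \<le> I" unfolding I_def by (intro integral_nonneg_AE) (simp add: c1_pos_nonneg)
  define N where "N = nat \<lceil>4 * real K * (I + \<eta>) / \<eta>\<rceil> + 1"
  have N: "real K * (I + \<eta>) < \<eta> * real N / 4"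
  proof -
    have "4 * real K * (I + \<eta>) / \<eta> < real N" unfolding N_def by linarith
    then show ?thesis using \<eta> by (simp add: field_simps)
  qed
  define w where "w v y = - \<eta> + (\<eta> + c1_pos y) * out K y
      + (if N < v + K then c1_pos y + \<eta> else 0)" for v y
  have int_out: "integrable M (out K)" "integrable M (\<lambda>y. c1_pos y * out K y)"
    unfolding out_def
    by (auto intro!: integrable_real_indicator integrable_real_mult_indicator integrable_c1_pos
        simp: emeasure_eq_measure)
  have w_split: "w v = (\<lambda>y. - \<eta> + \<eta> * out K y + c1_pos y * out K y
      + (if N < v + K then c1_pos y + \<eta> else 0))" for v
    by (auto simp: w_def algebra_simps)
  have int_w: "integrable M (w v)" for v
    unfolding w_split using int_out integrable_c1_pos by (cases "N < v + K") auto
  have integral_w: "integral\<^sup>L M (w v) = - \<eta> + \<eta> * integral\<^sup>L M (out K)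
      + integral\<^sup>L M (\<lambda>y. c1_pos y * out K y) + (if N < v + K then I + \<eta> else 0)" for v
    unfolding w_split I_def using int_out integrable_c1_pos
    by (cases "N < v + K") (simp_all add: prob_space)
  have "0 \<le> (\<Sum>v<N. integral\<^sup>L M (w v))"
    by (rule integral_orbit_sum_nonneg[OF int_w])
      (use le_sum_outside_drop_set \<eta> in \<open>force simp: w_def out_def\<close>)
  also have "\<dots> \<le> (\<Sum>v<N. - \<eta> / 2) + (\<Sum>v<N. if N < v + K then I + \<eta> else 0)"
    unfolding integral_w sum.distrib[symmetric]
    using K mult_strict_left_mono[OF K(1) \<eta>] by (intro sum_mono) auto
  also have "\<dots> \<le> real N * (- \<eta> / 2) + real K * (I + \<eta>)"
    using sum_lessThan_tail_le[of "I + \<eta>" N K] I \<eta> by simp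
  finally have "0 \<le> real N * (- \<eta> / 2) + real K * (I + \<eta>)" .
  moreover have "0 \<le> real K * (I + \<eta>)" using I \<eta> by simp
  ultimately show False using N by (simp add: algebra_simps)
qed

lemma frequently_below_pullback:
  assumes x: "x \<in> orbit_subadditive" and \<theta>: "0 \<le> \<theta>" and a: "0 < a"
    and freq: "\<forall>m. \<exists>n\<ge>m. c n (T x) < - (\<theta> + a) * real n"
  shows "\<exists>n\<ge>m. c n x < - (\<theta> + a / 2) * real n"
proof -
  obtain n where n: "n \<ge> max m (nat \<lceil>2 * (\<bar>c 1 x\<bar> + \<theta>) / a + 1\<rceil>)"
    "c n (T x) < - (\<theta> + a) * real n"
    using freq by blast
  have "2 * (\<bar>c 1 x\<bar> + \<theta>) / a + 1 \<le> real n" using n(1) by linarith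
  then have big: "\<bar>c 1 x\<bar> + \<theta> + a / 2 \<le> a * real n / 2" using a by (simp add: field_simps)
  have "c (1 + n) x \<le> c 1 x + c n (T x)"
    using orbit_subadditive_le[OF x, of 1 n 0] by simp
  also have "\<dots> < \<bar>c 1 x\<bar> - (\<theta> + a) * real n"
    using n(2) abs_ge_self[of "c 1 x"] by linarith
  also have "\<dots> \<le> - (\<theta> + a / 2) * real (1 + n)"
    using big by (simp add: field_simps)
  finally show ?thesis using n(1) by (intro exI[of _ "1 + n"]) auto
qed

text \<open>The set of points with \<open>liminf c n / n < -\<theta>\<close> is sub-invariant, hence null or conull.\<close>
lemma liminf_ge:
  assumes \<theta>: "\<theta> > 0"
  shows "AE x in M. \<forall>\<theta>'>\<theta>. \<exists>m. \<forall>n\<ge>m. - \<theta>' * real n \<le> c n x"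
proof -
  define S where "S = {x \<in> space M. \<exists>p::nat. \<forall>m. \<exists>n\<ge>m. c n x < - (\<theta> + 1 / (real p + 1)) * real n}"
  have S[measurable]: "S \<in> sets M" unfolding S_def by measurable
  have "AE x in M. T x \<in> S \<longrightarrow> x \<in> S"
    using AE_orbit_subadditive
  proof eventually_elim
    case (elim x)
    show ?case
    proof
      assume "T x \<in> S"
      then obtain p :: nat where "\<forall>m. \<exists>n\<ge>m. c n (T x) < - (\<theta> + 1 / (real p + 1)) * real n"
        by (auto simp: S_def)
      from frequently_below_pullback[OF elim _ _ this] \<theta>
      have "\<forall>m. \<exists>n\<ge>m. c n x < - (\<theta> + 1 / (real (2 * p + 1) + 1)) * real n"
        by (simp add: field_simps)
      then show "x \<in> S" using orbit_subadditive_in_space[OF elim] unfolding S_def by blast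
    qed
  qed
  then have "measure M S = 0 \<or> measure M S = 1" by (rule ergodic_subinvariant_trivial[OF S])
  moreover have "measure M S \<noteq> 1"
  proof
    assume "measure M S = 1"
    then have "AE x in M. x \<in> S" by (intro AE_prob_1) auto
    then have "AE x in M. \<forall>m. \<exists>n\<ge>m. c n x \<le> - \<theta> * real n"
      unfolding S_def
      by eventually_elim (fastforce intro: order.trans[OF less_imp_le] mult_right_mono)
    then show False using not_AE_frequently_below[OF \<theta>] by blast
  qed
  ultimately have "AE x in M. x \<notin> S"
    by (intro AE_not_in) (auto simp: emeasure_eq_measure null_sets_def)
  with AE_space show ?thesis
  proof eventually_elim
    case (elim x)
    show ?case
    proof (intro allI impI)
      fix \<theta>' assume "\<theta>' > \<theta>"
      then obtain p :: nat where p: "1 / (real p + 1) < \<theta>' - \<theta>"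
        by (metis diff_gt_0_iff_gt nat_approx_posE of_nat_Suc add.commute)
      from elim obtain m where "\<forall>n\<ge>m. - (\<theta> + 1 / (real p + 1)) * real n \<le> c n x"
        unfolding S_def by (auto simp: not_less)
      moreover have "- \<theta>' * real n \<le> - (\<theta> + 1 / (real p + 1)) * real n" for n
        using p by (intro mult_right_mono) auto
      ultimately show "\<exists>m. \<forall>n\<ge>m. - \<theta>' * real n \<le> c n x" by (meson order.trans)
    qed
  qed
qed

theorem liminf_nonneg: "AE x in M. \<forall>\<eta>>0. \<exists>m. \<forall>n\<ge>m. - \<eta> * real n \<le> c n x"
proof -
  have "AE x in M. \<forall>q::nat. \<forall>\<theta>'>1 / (real q + 1). \<exists>m. \<forall>n\<ge>m. - \<theta>' * real n \<le> c n x"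
    unfolding AE_all_countable by (intro allI liminf_ge) simp
  then show ?thesis
  proof eventually_elim
    case (elim x)
    show ?case
    proof (intro allI impI)
      fix \<eta> :: real assume "\<eta> > 0"
      then obtain q :: nat where "1 / (real q + 1) < \<eta>"
        by (metis nat_approx_posE of_nat_Suc add.commute)
      then show "\<exists>m. \<forall>n\<ge>m. - \<eta> * real n \<le> c n x" using elim by blast
    qed
  qed
qed

text \<open>Cutting the orbit into blocks of length \<open>k\<close> starting at the times \<open>\<equiv> r (mod k)\<close>,
  with unit steps before the first block and in the incomplete last block.\<close>
lemma le_sum_offset_blocks:
  assumes x: "x \<in> orbit_subadditive" and k: "k \<ge> 1" and r: "r < k"
  shows "c n x \<le> (\<Sum>v<n. if v < r \<or> n < v + k then c1_pos ((T ^^ v) x)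
                        else if v mod k = r then c k ((T ^^ v) x) else 0)"
proof -
  define h where "h v = (if v < r \<or> n < v + k then c1_pos ((T ^^ v) x)
                        else if v mod k = r then c k ((T ^^ v) x) else 0)" for v
  define D where "D u = c (n - u) ((T ^^ u) x)" for u
  define R where "R = {u. u < r \<or> n < u + k \<or> u mod k = r}"
  have "D 0 - D n \<le> (\<Sum>v\<in>{0..<n}. h v)"
  proof (rule telescoping_descent[where R=R])
    fix u assume uR: "u \<in> R" and u: "u < n"
    show "\<exists>u'>u. u' \<le> n \<and> (u' < n \<longrightarrow> u' \<in> R) \<and> D u - D u' \<le> (\<Sum>v\<in>{u..<u'}. h v)"
    proof (cases "u < r \<or> n < u + k")
      case True
      have "D u \<le> c 1 ((T ^^ u) x) + D (u + 1)"
        using orbit_subadditive_split[OF x, of u "u + 1" n] u by (simp add: D_def)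
      moreover have "c 1 ((T ^^ u) x) \<le> h u" using True c1_le_c1_pos by (simp add: h_def)
      moreover have "u + 1 \<in> R" using True r unfolding R_def by (cases "u + 1 = r") auto
      ultimately show ?thesis using u by (intro exI[of _ "u + 1"]) auto
    next
      case False
      then have u1: "u + k \<le> n" "u mod k = r" using uR unfolding R_def by auto
      have "D u \<le> c k ((T ^^ u) x) + D (u + k)"
        using orbit_subadditive_split[OF x, of u "u + k" n] u1 by (simp add: D_def)
      moreover have "c k ((T ^^ u) x) \<le> (\<Sum>v\<in>{u..<u+k}. h v)"
      proof -
        have "0 \<le> h v" if v: "v \<in> {Suc u..<u+k}" for v
        proof -
          have "0 < v - u" "v - u < k" using v by auto
          then have "v mod k \<noteq> r"
            using v u1 mod_eq_dvd_iff_nat[of u v k] nat_dvd_not_less[of "v - u" k] by auto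
          then show ?thesis using c1_pos_nonneg by (simp add: h_def)
        qed
        then have "0 \<le> (\<Sum>v\<in>{Suc u..<u+k}. h v)" by (intro sum_nonneg) auto
        moreover have "(\<Sum>v\<in>{u..<u+k}. h v) = h u + (\<Sum>v\<in>{Suc u..<u+k}. h v)"
          using k by (simp add: sum.atLeast_Suc_lessThan)
        ultimately show ?thesis using False u1 by (simp add: h_def)
      qed
      moreover have "u + k \<in> R" using u1 unfolding R_def by simp
      ultimately show ?thesis using u1 k by (intro exI[of _ "u + k"]) auto
    qed
  qed (auto simp: R_def)
  moreover have "D n = 0" using x orbit_subadditive_in_space by (simp add: D_def c_zero)
  ultimately show ?thesis by (simp add: D_def h_def atLeast0LessThan)
qed

lemma le_sum_block_average:
  assumes x: "x \<in> orbit_subadditive" and k: "k \<ge> 1"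
  shows "real k * c n x \<le> (\<Sum>v<n. if v + k \<le> n then c k ((T ^^ v) x) else 0)
      + real k * (\<Sum>v<n. if v < k \<or> n < v + k then c1_pos ((T ^^ v) x) else 0)"
proof -
  define h where "h r v = (if v < r \<or> n < v + k then c1_pos ((T ^^ v) x)
                        else if v mod k = r then c k ((T ^^ v) x) else 0)" for r v
  define A where "A v = (if v < k \<or> n < v + k then c1_pos ((T ^^ v) x) else 0)" for v
  define B where "B r v = (if r = v mod k \<and> v + k \<le> n then c k ((T ^^ v) x) else 0)" for r v
  have hAB: "h r v \<le> A v + B r v" if r: "r < k" for r v
    using r c1_pos_nonneg[of "(T ^^ v) x"] mod_less_eq_dividend[of v k]
    by (auto simp: h_def A_def B_def)
  have B_sum: "(\<Sum>r<k. B r v) = (if v + k \<le> n then c k ((T ^^ v) x) else 0)" for v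
    using k by (simp add: B_def sum.delta' eq_commute[of _ "v mod k"])
  have "real k * c n x = (\<Sum>r<k. c n x)" by simp
  also have "\<dots> \<le> (\<Sum>r<k. \<Sum>v<n. h r v)"
    by (intro sum_mono) (use le_sum_offset_blocks[OF x k] in \<open>simp add: h_def\<close>)
  also have "\<dots> = (\<Sum>v<n. \<Sum>r<k. h r v)" by (rule sum.swap)
  also have "\<dots> \<le> (\<Sum>v<n. \<Sum>r<k. A v + B r v)"
    by (intro sum_mono hAB) auto
  also have "\<dots> = (\<Sum>v<n. if v + k \<le> n then c k ((T ^^ v) x) else 0) + real k * (\<Sum>v<n. A v)"
    by (simp add: sum.distrib sum_distrib_left B_sum)
  finally show ?thesis by (simp add: A_def)
qed

definition c1_pos_above :: "nat \<Rightarrow> 'a \<Rightarrow> real" where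
  "c1_pos_above j y = (if real j < c1_pos y then c1_pos y else 0)"

lemma measurable_c1_pos_above[measurable]: "c1_pos_above j \<in> borel_measurable M"
  unfolding c1_pos_above_def by measurable

lemma c1_pos_above_nonneg: "0 \<le> c1_pos_above j y"
  using c1_pos_nonneg by (simp add: c1_pos_above_def)

lemma c1_pos_le_above: "c1_pos y \<le> real j + c1_pos_above j y"
  by (simp add: c1_pos_above_def)

lemma integrable_c1_pos_above: "integrable M (c1_pos_above j)"
proof -
  have "integrable M (\<lambda>y. c1_pos y * indicator {y \<in> space M. real j < c1_pos y} y)"
    by (intro integrable_real_mult_indicator integrable_c1_pos) measurable
  moreover have "integrable M (c1_pos_above j) \<longleftrightarrow>
      integrable M (\<lambda>y. c1_pos y * indicator {y \<in> space M. real j < c1_pos y} y)"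
    by (intro Bochner_Integration.integrable_cong) (auto simp: c1_pos_above_def indicator_def)
  ultimately show ?thesis by simp
qed

lemma tendsto_integral_c1_pos_above: "(\<lambda>j. integral\<^sup>L M (c1_pos_above j)) \<longlonglongrightarrow> 0"
proof (rule integral_tendsto_zero_dominated[OF _ integrable_c1_pos])
  show "AE y in M. \<forall>\<^sub>F j in sequentially. c1_pos_above j y = 0"
  proof (intro AE_I2)
    fix y
    obtain j0 :: nat where "c1_pos y < real j0" using reals_Archimedean2 by blast
    then show "\<forall>\<^sub>F j in sequentially. c1_pos_above j y = 0"
      unfolding eventually_sequentially c1_pos_above_def by (intro exI[of _ j0]) auto
  qed
qed (auto simp: c1_pos_above_def c1_pos_nonneg)

lemma orbit_le_c1_pos_above:
  assumes "x \<in> orbit_subadditive" "u \<le> t"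
  shows "c (t - u) ((T ^^ u) x) \<le> real (t - u) * real j + (\<Sum>v\<in>{u..<t}. c1_pos_above j ((T ^^ v) x))"
proof -
  have "c (t - u) ((T ^^ u) x) \<le> (\<Sum>v\<in>{u..<t}. c 1 ((T ^^ v) x))"
    using orbit_subadditive_le_sum_one[OF assms(1), of "t - u" u] assms(2) by simp
  also have "\<dots> \<le> (\<Sum>v\<in>{u..<t}. real j + c1_pos_above j ((T ^^ v) x))"
    by (intro sum_mono order_trans[OF c1_le_c1_pos c1_pos_le_above])
  finally show ?thesis using assms(2) by (simp add: sum.distrib)
qed

end

context ergodic_system
begin

text \<open>Birkhoff's theorem is the additive case of the cocycle bound, applied to \<open>n \<integral>g - S\<^sub>n g\<close>.\<close>
lemma birkhoff_upper:
  fixes g :: "'a \<Rightarrow> real"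
  assumes g: "integrable M g"
  shows "AE x in M. \<forall>\<eta>>0. \<exists>m. \<forall>n\<ge>m.
           (\<Sum>v<n. g ((T ^^ v) x)) \<le> real n * integral\<^sup>L M g + \<eta> * real n"
proof -
  define c where "c n x = real n * integral\<^sup>L M g - (\<Sum>v<n. g ((T ^^ v) x))" for n x
  have [measurable]: "g \<in> borel_measurable M" using g by auto
  have integrable_S: "integrable M (\<lambda>x. \<Sum>v<n. g ((T ^^ v) x))" for n
    by (rule Bochner_Integration.integrable_sum) (rule integrable_funpow_T[OF g])
  have integrable_c: "integrable M (c n)" for n
    unfolding c_def using integrable_S by auto
  have integral_c: "integral\<^sup>L M (c n) = 0" for n
  proof -
    have "integral\<^sup>L M (\<lambda>x. \<Sum>v<n. g ((T ^^ v) x)) = (\<Sum>v<n. integral\<^sup>L M g)"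
      by (subst Bochner_Integration.integral_sum)
        (simp_all add: integrable_funpow_T[OF g] integral_funpow_T)
    then show ?thesis unfolding c_def using integrable_S by (simp add: prob_space)
  qed
  interpret subadditive_cocycle M T c
  proof
    show "c n \<in> borel_measurable M" for n unfolding c_def by measurable
    show "c 0 x = 0" for x by (simp add: c_def)
    show "AE x in M. c (n + m) x \<le> c n x + c m ((T ^^ n) x)" for n m
    proof (intro AE_I2)
      fix x
      have "(\<Sum>v<n+m. g ((T ^^ v) x)) = (\<Sum>v<n. g ((T ^^ v) x)) + (\<Sum>v<m. g ((T ^^ v) ((T ^^ n) x)))"
        by (simp add: sum_lessThan_add_split funpow_apply_add)
      then show "c (n + m) x \<le> c n x + c m ((T ^^ n) x)" by (simp add: c_def algebra_simps)
    qed
    show "integrable M (c 1)" by (rule integrable_c)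
    show "0 \<le> integral\<^sup>L M F" if "integrable M F" "AE x in M. c N x \<le> F x" for N F
      using integral_mono_AE[OF integrable_c that] by (simp add: integral_c)
  qed
  show ?thesis using liminf_nonneg
  proof eventually_elim
    case (elim x)
    show ?case
    proof (intro allI impI)
      fix \<eta> :: real assume "\<eta> > 0"
      with elim obtain m where m: "\<forall>n\<ge>m. - \<eta> * real n \<le> c n x" by blast
      have "(\<Sum>v<n. g ((T ^^ v) x)) \<le> real n * integral\<^sup>L M g + \<eta> * real n" if "n \<ge> m" for n
        using m[rule_format, OF that] by (simp add: c_def)
      then show "\<exists>m. \<forall>n\<ge>m. (\<Sum>v<n. g ((T ^^ v) x)) \<le> real n * integral\<^sup>L M g + \<eta> * real n"
        by blast
    qed
  qed
qed

theorem birkhoff: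
  fixes g :: "'a \<Rightarrow> real"
  assumes g: "integrable M g"
  shows "AE x in M. \<forall>\<eta>>0. \<exists>m. \<forall>n\<ge>m.
           \<bar>(\<Sum>v<n. g ((T ^^ v) x)) - real n * integral\<^sup>L M g\<bar> \<le> \<eta> * real n"
proof -
  have "integrable M (\<lambda>x. - g x)" using g by auto
  from birkhoff_upper[OF g] birkhoff_upper[OF this] show ?thesis
  proof eventually_elim
    case (elim x)
    show ?case
    proof (intro allI impI)
      fix \<eta> :: real assume "\<eta> > 0"
      with elim obtain m1 m2 where
        m1: "\<forall>n\<ge>m1. (\<Sum>v<n. g ((T ^^ v) x)) \<le> real n * integral\<^sup>L M g + \<eta> * real n" and
        m2: "\<forall>n\<ge>m2. (\<Sum>v<n. - g ((T ^^ v) x)) \<le> real n * integral\<^sup>L M (\<lambda>x. - g x) + \<eta> * real n"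
        by blast
      have "\<bar>(\<Sum>v<n. g ((T ^^ v) x)) - real n * integral\<^sup>L M g\<bar> \<le> \<eta> * real n"
        if "n \<ge> max m1 m2" for n
        using m1[rule_format, of n] m2[rule_format, of n] that by (simp add: sum_negf abs_le_iff)
      then show "\<exists>m. \<forall>n\<ge>m. \<bar>(\<Sum>v<n. g ((T ^^ v) x)) - real n * integral\<^sup>L M g\<bar> \<le> \<eta> * real n"
        by blast
    qed
  qed
qed

lemma birkhoff_term_sublinear:
  fixes g :: "'a \<Rightarrow> real"
  assumes g: "integrable M g"
  shows "AE x in M. \<forall>\<eta>>0. \<exists>m. \<forall>n\<ge>m. \<bar>g ((T ^^ n) x)\<bar> \<le> \<eta> * real n"
  using birkhoff[OF g]
proof eventually_elim
  case (elim x)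
  define E where "E = integral\<^sup>L M g"
  define S where "S n = (\<Sum>v<n. g ((T ^^ v) x)) - real n * E" for n
  show ?case
  proof (intro allI impI)
    fix \<eta> :: real assume \<eta>: "\<eta> > 0"
    then obtain m where m: "\<forall>n\<ge>m. \<bar>S n\<bar> \<le> \<eta> / 3 * real n"
      using elim unfolding S_def E_def by (metis divide_pos_pos zero_less_numeral)
    have "\<bar>g ((T ^^ n) x)\<bar> \<le> \<eta> * real n" if n: "n \<ge> max m (nat \<lceil>1 + 3 * \<bar>E\<bar> / \<eta>\<rceil>)" for n
    proof -
      have "1 + 3 * \<bar>E\<bar> / \<eta> \<le> real n" using n by linarith
      then have "\<eta> + 3 * \<bar>E\<bar> \<le> \<eta> * real n" using \<eta> by (simp add: field_simps)
      moreover have "g ((T ^^ n) x) = S (Suc n) - S n + E" by (simp add: S_def algebra_simps)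
      moreover have "\<bar>S (Suc n)\<bar> \<le> \<eta> / 3 * real (Suc n)" "\<bar>S n\<bar> \<le> \<eta> / 3 * real n"
        using m[rule_format, of "Suc n"] m[rule_format, of n] n by auto
      ultimately show ?thesis by (simp add: abs_le_iff field_simps) linarith
    qed
    then show "\<exists>m. \<forall>n\<ge>m. \<bar>g ((T ^^ n) x)\<bar> \<le> \<eta> * real n" by blast
  qed
qed

end

locale integrable_subadditive_cocycle = ergodic_system +
  fixes a :: "nat \<Rightarrow> 'a \<Rightarrow> real" and A :: real
  assumes measurable_a[measurable]: "\<And>n. a n \<in> borel_measurable M"
    and a_zero: "\<And>x. x \<in> space M \<Longrightarrow> a 0 x = 0"
    and a_subadditive:
      "\<And>n m. n > 0 \<Longrightarrow> m > 0 \<Longrightarrow> AE x in M. a (n + m) x \<le> a n x + a m ((T ^^ n) x)"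
    and integrable_a_one: "integrable M (a 1)"
    and asymptotic_average: "(INF n\<in>{1::nat..}. ext_integral M (a n) / ereal (real n)) = ereal A"
begin

definition centered :: "nat \<Rightarrow> 'a \<Rightarrow> real" where "centered n x = a n x - A * real n"

lemma measurable_centered[measurable]: "centered n \<in> borel_measurable M"
  unfolding centered_def by measurable

lemma ext_integral_ge:
  assumes "n \<ge> 1"
  shows "ereal (A * real n) \<le> ext_integral M (a n)"
proof -
  have "ereal A \<le> ext_integral M (a n) / ereal (real n)"
    using INF_lower[of n "{1..}" "\<lambda>n. ext_integral M (a n) / ereal (real n)"] assms
      asymptotic_average by simp
  then have "ereal (real n) * ereal A \<le> ext_integral M (a n)"
    using assms by (subst (asm) ereal_le_divide_pos) auto
  then show ?thesis by (simp add: mult.commute)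
qed

sublocale C: subadditive_cocycle M T centered
proof
  show "centered n \<in> borel_measurable M" for n by simp
  show "centered 0 x = 0" if "x \<in> space M" for x
    using a_zero[OF that] by (simp add: centered_def)
  show "AE x in M. centered (n + m) x \<le> centered n x + centered m ((T ^^ n) x)"
    if "n > 0" "m > 0" for n m
    using a_subadditive[OF that] by eventually_elim (simp add: centered_def algebra_simps)
  show "integrable M (centered 1)" unfolding centered_def using integrable_a_one by auto
  show "0 \<le> integral\<^sup>L M F" if F: "integrable M F" "AE x in M. centered N x \<le> F x" for N F
  proof (cases "N = 0")
    case True
    have "AE x in M. 0 \<le> F x" using F(2) AE_space
      by eventually_elim (use True a_zero in \<open>auto simp: centered_def\<close>)
    then show ?thesis by (rule integral_nonneg_AE)
  next
    case False
    have "ext_integral M (a N) \<le> ereal (integral\<^sup>L M (\<lambda>x. F x + A * real N))"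
      by (rule ext_integral_le_integral) (use F in \<open>auto simp: centered_def\<close>)
    moreover have "integral\<^sup>L M (\<lambda>x. F x + A * real N) = integral\<^sup>L M F + A * real N"
      using F by (simp add: prob_space)
    ultimately have "ereal (A * real N) \<le> ereal (integral\<^sup>L M F + A * real N)"
      using ext_integral_ge[of N] False by (metis order_trans less_one not_le)
    then show ?thesis by simp
  qed
qed

lemma integrable_a:
  assumes k: "k \<ge> 1"
  shows "integrable M (a k)"
proof -
  define U where "U x = (\<Sum>v<k. centered 1 ((T ^^ v) x)) + A * real k" for x
  have "integrable M (\<lambda>x. \<Sum>v<k. centered 1 ((T ^^ v) x))"
    by (intro Bochner_Integration.integrable_sum) (rule integrable_funpow_T[OF C.integrable_c_one])
  then have Ui: "integrable M U" unfolding U_def by auto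
  have "AE x in M. a k x \<le> U x" using C.AE_orbit_subadditive
  proof eventually_elim
    case (elim x)
    have "centered k x \<le> (\<Sum>v<k. centered 1 ((T ^^ v) x))"
      using C.orbit_subadditive_le_sum_one[OF elim, of k 0] by (simp add: atLeast0LessThan)
    then show ?case by (simp add: U_def centered_def)
  qed
  moreover have "ext_integral M (a k) \<noteq> - \<infinity>" using ext_integral_ge[OF k] by auto
  ultimately show ?thesis using integrable_if_ext_integral_finite[OF measurable_a Ui] by blast
qed

lemma integrable_centered:
  assumes k: "k \<ge> 1"
  shows "integrable M (centered k)"
  unfolding centered_def using integrable_a[OF k] by auto

lemma integral_centered_nonneg:
  assumes k: "k \<ge> 1"
  shows "0 \<le> integral\<^sup>L M (centered k)"
proof -
  have "ereal (A * real k) \<le> ereal (integral\<^sup>L M (a k))"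
    using ext_integral_ge[OF k] ext_integral_eq_integral[OF integrable_a[OF k]] by simp
  moreover have "integral\<^sup>L M (centered k) = integral\<^sup>L M (a k) - A * real k"
    unfolding centered_def using integrable_a[OF k] by (simp add: prob_space)
  ultimately show ?thesis by simp
qed

lemma integral_centered_small:
  assumes "\<theta> > 0"
  shows "\<exists>k\<ge>1. integral\<^sup>L M (centered k) \<le> \<theta> * real k"
proof -
  have "(INF n\<in>{1::nat..}. ext_integral M (a n) / ereal (real n)) < ereal (A + \<theta>)"
    using asymptotic_average assms by simp
  then obtain k where k: "k \<ge> 1" "ext_integral M (a k) / ereal (real k) < ereal (A + \<theta>)"
    by (auto simp: INF_less_iff)
  then have "\<not> ereal (real k) * ereal (A + \<theta>) \<le> ext_integral M (a k)"
    by (subst ereal_le_divide_pos[symmetric]) auto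
  then have "integral\<^sup>L M (a k) < real k * (A + \<theta>)"
    using ext_integral_eq_integral[OF integrable_a[OF k(1)]] by simp
  moreover have "integral\<^sup>L M (centered k) = integral\<^sup>L M (a k) - A * real k"
    unfolding centered_def using integrable_a[OF k(1)] by (simp add: prob_space)
  ultimately show ?thesis using k(1) by (intro exI[of _ k]) (auto simp: algebra_simps)
qed

text \<open>Kingman's upper bound: block averages of length \<open>k\<close> are controlled by Birkhoff's theorem
  for \<open>centered k\<close>, and \<open>\<integral> centered k / k\<close> can be made arbitrarily small.\<close>
lemma centered_eventually_le:
  assumes \<theta>: "\<theta> > 0"
  shows "AE x in M. \<exists>m. \<forall>n\<ge>m. centered n x \<le> \<theta> * real n"
proof -
  obtain k where k: "k \<ge> 1" "integral\<^sup>L M (centered k) \<le> \<theta> / 4 * real k"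
    using integral_centered_small[of "\<theta> / 4"] \<theta> by auto
  define E where "E = integral\<^sup>L M (centered k)"
  have E: "0 \<le> E" unfolding E_def by (rule integral_centered_nonneg[OF k(1)])
  define \<eta> where "\<eta> = \<theta> * real k / 4"
  define \<eta>' where "\<eta>' = \<theta> / (4 * real k)"
  have \<eta>: "\<eta> > 0" "\<eta>' > 0" using \<theta> k by (auto simp: \<eta>_def \<eta>'_def)
  show ?thesis
    using C.AE_orbit_subadditive birkhoff[OF integrable_centered[OF k(1)]]
      birkhoff_term_sublinear[OF C.integrable_c1_pos]
  proof eventually_elim
    case (elim x)
    obtain m1 where m1: "\<forall>n\<ge>m1.
        \<bar>(\<Sum>v<n. centered k ((T ^^ v) x)) - real n * E\<bar> \<le> \<eta> * real n"
      using elim(2) \<eta> unfolding E_def by blast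
    obtain m2 where m2: "\<forall>n\<ge>m2. \<bar>C.c1_pos ((T ^^ n) x)\<bar> \<le> \<eta>' * real n"
      using elim(3) \<eta> by blast
    define B where "B = (\<Sum>v<k. C.c1_pos ((T ^^ v) x))"
    have "centered n x \<le> \<theta> * real n" if n: "n \<ge> m1 + m2 + k + nat \<lceil>4 * B / \<theta>\<rceil>" for n
    proof -
      have "(\<Sum>v<n. if v + k \<le> n then centered k ((T ^^ v) x) else 0)
          = (\<Sum>v<n - k + 1. centered k ((T ^^ v) x))"
        using n k(1) by (intro sum_lessThan_if_add_le) auto
      also have "\<dots> \<le> real (n - k + 1) * E + \<eta> * real (n - k + 1)"
        using m1[rule_format, of "n - k + 1"] n by (simp only: abs_le_iff) linarith
      also have "\<dots> = real (n - k + 1) * (E + \<eta>)" by (simp add: algebra_simps)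
      also have "\<dots> \<le> real n * (E + \<eta>)" using E \<eta> n k(1) by (intro mult_right_mono) auto
      finally have main:
        "(\<Sum>v<n. if v + k \<le> n then centered k ((T ^^ v) x) else 0) \<le> real n * (E + \<eta>)" .
      have boundary: "(\<Sum>v<n. if v < k \<or> n < v + k then C.c1_pos ((T ^^ v) x) else 0)
          \<le> B + real k * (\<eta>' * real n)"
        unfolding B_def using m2 \<eta> n by (intro sum_boundary_le[of m2]) auto
      have "4 * B / \<theta> \<le> real n" using n by linarith
      then have B_le: "real k * B \<le> real k * (\<theta> * real n) / 4"
        using \<theta> mult_left_mono[of B "\<theta> * real n / 4" "real k"] by (simp add: field_simps)
      have E_le: "real n * E \<le> real k * (\<theta> * real n) / 4"
        using mult_left_mono[OF k(2), of "real n"] unfolding E_def by (simp add: algebra_simps)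
      have "real k * centered n x \<le> real n * (E + \<eta>) + real k * (B + real k * (\<eta>' * real n))"
        using C.le_sum_block_average[OF elim(1) k(1), of n] main boundary k(1)
        by (smt (verit) mult_left_mono of_nat_0_le_iff)
      also have "\<dots> = real n * E + real k * (\<theta> * real n) / 4 + real k * B + real k * (\<theta> * real n) / 4"
        using k(1) by (simp add: \<eta>_def \<eta>'_def field_simps)
      also have "\<dots> \<le> real k * (\<theta> * real n)" using B_le E_le by linarith
      finally have "real k * centered n x \<le> real k * (\<theta> * real n)" .
      then show ?thesis using k(1) by simp
    qed
    then show ?case by blast
  qed
qed

theorem centered_limsup_le: "AE x in M. \<forall>\<theta>>0. \<exists>m. \<forall>n\<ge>m. centered n x \<le> \<theta> * real n"
proof -
  have "AE x in M. \<forall>q::nat. \<exists>m. \<forall>n\<ge>m. centered n x \<le> 1 / (real q + 1) * real n"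
    unfolding AE_all_countable by (intro allI centered_eventually_le) simp
  then show ?thesis
  proof eventually_elim
    case (elim x)
    show ?case
    proof (intro allI impI)
      fix \<theta> :: real assume "\<theta> > 0"
      then obtain q :: nat where q: "1 / (real q + 1) < \<theta>"
        by (metis nat_approx_posE of_nat_Suc add.commute)
      from elim obtain m where "\<forall>n\<ge>m. centered n x \<le> 1 / (real q + 1) * real n" by blast
      moreover have "1 / (real q + 1) * real n \<le> \<theta> * real n" for n
        using q by (intro mult_right_mono) auto
      ultimately show "\<exists>m. \<forall>n\<ge>m. centered n x \<le> \<theta> * real n" by (meson order.trans)
    qed
  qed
qed

text \<open>\<open>x \<in> good_time_set L \<epsilon> n\<close> says that \<open>n\<close> is an \<open>\<epsilon>\<close>-good time for \<open>x\<close> beyond the scale \<open>L\<close>,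
  i.e. the lower half of the estimate of the theorem holds at \<open>x\<close> for \<open>n\<close> and all \<open>l \<ge> L\<close>.\<close>
definition good_time_set :: "nat \<Rightarrow> real \<Rightarrow> nat \<Rightarrow> 'a set" where
  "good_time_set L \<epsilon> n = {x \<in> space M. \<forall>l. L \<le> l \<and> l \<le> n \<longrightarrow>
     centered (n - l) ((T ^^ l) x) \<le> centered n x + \<epsilon> * real l}"

lemma good_time_set_sets[measurable]: "good_time_set L \<epsilon> n \<in> sets M"
  unfolding good_time_set_def by measurable

lemma good_time_set_zero: "good_time_set L \<epsilon> 0 = space M"
  by (auto simp: good_time_set_def)

lemma bad_time_jump:
  assumes "x \<in> space M" "(T ^^ v) x \<notin> good_time_set L \<epsilon> (N - v)"
  shows "\<exists>l. L \<le> l \<and> l \<le> N - v \<and>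
           centered (N - v) ((T ^^ v) x) + \<epsilon> * real l < centered (N - (v + l)) ((T ^^ (v + l)) x)"
  using assms by (auto simp: good_time_set_def funpow_apply_add diff_diff_add add.commute not_le)

text \<open>Along the orbit we jump over bad times (gaining \<open>\<epsilon> l\<close>),
  over drops \<open>centered k \<le> \<epsilon>' k\<close> of length \<open>k \<le> K\<close>, and otherwise by unit steps. A drop that
  contains a bad time is cut at the first one; its cost is at most \<open>K j\<close> plus large values of
  \<open>c1_pos\<close>, which the jump over the bad time absorbs since \<open>K j \<le> \<epsilon> L / 2\<close>.\<close>
lemma le_sum_good_time_weights:
  fixes \<epsilon> \<epsilon>' :: real and K L j N :: nat
  defines "w v y \<equiv> \<epsilon>' + C.c1_pos y * indicator (space M - C.drop_set \<epsilon>' K) y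
      + C.c1_pos_above j y + (if N < v + K then C.c1_pos y else 0)
      - \<epsilon> / 2 * indicator (space M - good_time_set L \<epsilon> (N - v)) y"
  assumes x: "x \<in> C.orbit_subadditive" and \<epsilon>: "0 < \<epsilon>" "0 \<le> \<epsilon>'"
    and scale: "real K * real j \<le> \<epsilon> / 2 * real L"
  shows "centered N x \<le> (\<Sum>v<N. w v ((T ^^ v) x))"
proof -
  have xs: "x \<in> space M" using x C.orbit_subadditive_in_space by blast
  define D where "D u = centered (N - u) ((T ^^ u) x)" for u
  define h where "h v = w v ((T ^^ v) x)" for v
  define bad where "bad v \<longleftrightarrow> (T ^^ v) x \<notin> good_time_set L \<epsilon> (N - v)" for v
  have nonneg: "0 \<le> C.c1_pos y" "0 \<le> C.c1_pos_above j y" for y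
    by (simp_all add: C.c1_pos_nonneg C.c1_pos_above_nonneg)
  have h_ge: "- \<epsilon> / 2 \<le> h v" for v
    using nonneg[of "(T ^^ v) x"] \<epsilon> by (auto simp: h_def w_def indicator_def)
  have h_good: "\<epsilon>' + C.c1_pos_above j ((T ^^ v) x) \<le> h v" if "\<not> bad v" for v
    using that nonneg[of "(T ^^ v) x"] xs \<epsilon> by (auto simp: h_def w_def bad_def indicator_def)
  have sum_ge: "- \<epsilon> / 2 * real l \<le> (\<Sum>v\<in>{u..<u+l}. h v)" for u l
    using sum_mono[of "{u..<u+l}" "\<lambda>_. - \<epsilon> / 2" h] h_ge by (simp add: mult.commute)
  have jump: "\<exists>l. 0 < l \<and> L \<le> l \<and> l \<le> N - v \<and> D v + \<epsilon> * real l < D (v + l)"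
    if bad: "bad v" for v
  proof -
    obtain l where l: "L \<le> l" "l \<le> N - v" "D v + \<epsilon> * real l < D (v + l)"
      using bad_time_jump[OF xs] bad unfolding D_def bad_def by blast
    moreover have "l \<noteq> 0" using l(3) by (cases "l = 0") auto
    ultimately show ?thesis by blast
  qed
  have "D 0 - D N \<le> (\<Sum>v\<in>{0..<N}. h v)"
  proof (rule telescoping_descent[where R=UNIV])
    fix u assume u: "u < N"
    let ?y = "(T ^^ u) x"
    show "\<exists>u'>u. u' \<le> N \<and> (u' < N \<longrightarrow> u' \<in> UNIV) \<and> D u - D u' \<le> (\<Sum>v\<in>{u..<u'}. h v)"
    proof (cases "bad u")
      case True
      then obtain l where l: "0 < l" "L \<le> l" "l \<le> N - u" "D u + \<epsilon> * real l < D (u + l)"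
        using jump by blast
      have "0 \<le> \<epsilon> * real l" using \<epsilon> by simp
      then have "D u - D (u + l) \<le> - \<epsilon> / 2 * real l" using l by linarith
      with sum_ge[of l u] l u show ?thesis by (intro exI[of _ "u + l"]) auto
    next
      case good: False
      show ?thesis
      proof (cases "?y \<in> C.drop_set \<epsilon>' K \<and> u + K \<le> N")
        case drop: True
        then obtain k where k: "1 \<le> k" "k \<le> K" "centered k ?y \<le> \<epsilon>' * real k"
          by (auto simp: C.drop_set_def)
        show ?thesis
        proof (cases "\<exists>t. u < t \<and> t < u + k \<and> bad t")
          case True
          define t where "t = (LEAST t. u < t \<and> t < u + k \<and> bad t)"
          have t: "u < t" "t < u + k" "bad t" using LeastI_ex[OF True] unfolding t_def by auto
          have before: "\<not> bad v" if "u \<le> v" "v < t" for v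
            using good not_less_Least[of v "\<lambda>t. u < t \<and> t < u + k \<and> bad t"] that t
            unfolding t_def by (cases "v = u") auto
          obtain l where l: "0 < l" "L \<le> l" "l \<le> N - t" "D t + \<epsilon> * real l < D (t + l)"
            using jump[OF t(3)] by blast
          have "D u \<le> centered (t - u) ?y + D t"
            using C.orbit_subadditive_split[OF x, of u t N] t drop k by (simp add: D_def)
          also have "centered (t - u) ?y
              \<le> real (t - u) * real j + (\<Sum>v\<in>{u..<t}. C.c1_pos_above j ((T ^^ v) x))"
            using C.orbit_le_c1_pos_above[OF x, of u t j] t by simp
          also have "real (t - u) * real j \<le> \<epsilon> / 2 * real l"
          proof -
            have "real (t - u) * real j \<le> real K * real j" using t k by (intro mult_right_mono) auto
            also have "\<dots> \<le> \<epsilon> / 2 * real L" by (rule scale)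
            also have "\<dots> \<le> \<epsilon> / 2 * real l" using l \<epsilon> by (intro mult_left_mono) auto
            finally show ?thesis .
          qed
          also have "(\<Sum>v\<in>{u..<t}. C.c1_pos_above j ((T ^^ v) x)) \<le> (\<Sum>v\<in>{u..<t}. h v)"
          proof (intro sum_mono)
            fix v assume "v \<in> {u..<t}"
            then show "C.c1_pos_above j ((T ^^ v) x) \<le> h v"
              using h_good[of v] before[of v] \<epsilon> by simp
          qed
          finally have "D u - D (t + l) \<le> (\<Sum>v\<in>{u..<t}. h v) + (\<Sum>v\<in>{t..<t+l}. h v)"
            using l(4) sum_ge[of l t] by simp
          also have "\<dots> = (\<Sum>v\<in>{u..<t+l}. h v)"
            using t by (intro sum.atLeastLessThan_concat) auto
          finally show ?thesis using t l by (intro exI[of _ "t + l"]) auto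
        next
          case False
          have "D u \<le> centered k ?y + D (u + k)"
            using C.orbit_subadditive_split[OF x, of u "u + k" N] drop k by (simp add: D_def)
          moreover have "(\<Sum>v\<in>{u..<u+k}. \<epsilon>') \<le> (\<Sum>v\<in>{u..<u+k}. h v)"
          proof (intro sum_mono)
            fix v assume v: "v \<in> {u..<u+k}"
            then have "\<not> bad v" using good False by (cases "v = u") auto
            then show "\<epsilon>' \<le> h v" using h_good[of v] nonneg[of "(T ^^ v) x"] by simp
          qed
          ultimately show ?thesis
            using k drop by (intro exI[of _ "u + k"]) (auto simp: mult.commute)
        qed
      next
        case False
        have "D u \<le> centered 1 ?y + D (u + 1)"
          using C.orbit_subadditive_split[OF x, of u "u + 1" N] u by (simp add: D_def)
        moreover have "C.c1_pos ?y \<le> h u"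
          using False good nonneg[of ?y] xs \<epsilon>
          by (auto simp: h_def w_def bad_def indicator_def)
        ultimately show ?thesis using u C.c1_le_c1_pos[of ?y] by (intro exI[of _ "u + 1"]) auto
      qed
    qed
  qed auto
  moreover have "D N = 0" using xs by (simp add: D_def C.c_zero)
  ultimately show ?thesis by (simp add: D_def h_def atLeast0LessThan)
qed

text \<open>Bad times have upper density at most \<open>\<rho>\<close> once \<open>L\<close> is large: integrate the pointwise
  estimate and use that the expected weight is at most \<open>3 \<epsilon>'\<close> per step.\<close>
lemma good_time_density:
  assumes \<epsilon>: "\<epsilon> > 0" and \<rho>: "\<rho> > 0"
  shows "\<exists>L B. \<forall>N. (\<Sum>n<N. measure M (space M - good_time_set L \<epsilon> n)) \<le> \<rho> * real N + B"
proof -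
  define \<epsilon>' where "\<epsilon>' = \<rho> * \<epsilon> / 12"
  have \<epsilon>': "\<epsilon>' > 0" using \<epsilon> \<rho> by (simp add: \<epsilon>'_def)
  define out where "out K = (indicator (space M - C.drop_set \<epsilon>' K) :: 'a \<Rightarrow> real)" for K
  have "AE x in M. \<exists>n\<ge>1. centered n x \<le> \<epsilon>' * real n"
    using centered_limsup_le
  proof eventually_elim
    case (elim x)
    then obtain m where "\<forall>n\<ge>m. centered n x \<le> \<epsilon>' * real n" using \<epsilon>' by blast
    then show ?case by (intro exI[of _ "max m 1"]) auto
  qed
  from C.tendsto_drop_set_complement[OF this C.integrable_c1_pos C.c1_pos_nonneg]
  have "eventually (\<lambda>K. integral\<^sup>L M (\<lambda>x. C.c1_pos x * out K x) < \<epsilon>') sequentially"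
    unfolding out_def using \<epsilon>' by (intro order_tendstoD)
  then obtain K where K: "integral\<^sup>L M (\<lambda>x. C.c1_pos x * out K x) < \<epsilon>'"
    using eventually_happens'[OF sequentially_bot] by blast
  have "eventually (\<lambda>j. integral\<^sup>L M (C.c1_pos_above j) < \<epsilon>') sequentially"
    using C.tendsto_integral_c1_pos_above \<epsilon>' by (intro order_tendstoD)
  then obtain j where j: "integral\<^sup>L M (C.c1_pos_above j) < \<epsilon>'"
    using eventually_happens'[OF sequentially_bot] by blast
  define L where "L = nat \<lceil>2 * real j * real K / \<epsilon>\<rceil>"
  have scale: "real K * real j \<le> \<epsilon> / 2 * real L"
  proof -
    have "2 * real j * real K / \<epsilon> \<le> real L" unfolding L_def by linarith
    then show ?thesis using \<epsilon> by (simp add: field_simps)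
  qed
  define I where "I = integral\<^sup>L M C.c1_pos"
  have I: "0 \<le> I" unfolding I_def by (intro integral_nonneg_AE) (simp add: C.c1_pos_nonneg)
  define \<mu> where "\<mu> n = measure M (space M - good_time_set L \<epsilon> n)" for n
  have "(\<Sum>n<N. \<mu> n) \<le> \<rho> * real N + 2 * real K * I / \<epsilon>" for N
  proof -
    define w where "w v y = \<epsilon>' + C.c1_pos y * out K y + C.c1_pos_above j y
      + (if N < v + K then C.c1_pos y else 0)
      - \<epsilon> / 2 * indicator (space M - good_time_set L \<epsilon> (N - v)) y" for v y
    have int_out: "integrable M (\<lambda>y. C.c1_pos y * out K y)"
      unfolding out_def by (intro integrable_real_mult_indicator C.integrable_c1_pos) simp
    have int_bad: "integrable M (indicator (space M - good_time_set L \<epsilon> n) :: 'a \<Rightarrow> real)" for n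
      by (intro integrable_real_indicator) (auto simp: emeasure_eq_measure)
    have int_tail: "integrable M (\<lambda>y. if N < v + K then C.c1_pos y else 0)" for v
      using C.integrable_c1_pos by (cases "N < v + K") auto
    have int_w: "integrable M (w v)" for v
      unfolding w_def using int_out int_bad int_tail C.integrable_c1_pos_above by auto
    have integral_w: "integral\<^sup>L M (w v) = \<epsilon>' + integral\<^sup>L M (\<lambda>y. C.c1_pos y * out K y)
        + integral\<^sup>L M (C.c1_pos_above j) + (if N < v + K then I else 0) - \<epsilon> / 2 * \<mu> (N - v)" for v
      unfolding w_def \<mu>_def I_def using int_out int_bad int_tail C.integrable_c1_pos_above
      by (simp add: prob_space Diff_subset Int_absorb2)
    have "(\<Sum>n<N. \<mu> n) \<le> (\<Sum>v<N. \<mu> (N - v))"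
      by (rule sum_lessThan_le_sum_reverse) (auto simp: \<mu>_def good_time_set_zero)
    then have reverse: "\<epsilon> / 2 * (\<Sum>n<N. \<mu> n) \<le> \<epsilon> / 2 * (\<Sum>v<N. \<mu> (N - v))"
      using \<epsilon> by (intro mult_left_mono) auto
    have "0 \<le> (\<Sum>v<N. integral\<^sup>L M (w v))"
      by (rule C.integral_orbit_sum_nonneg[OF int_w])
        (use le_sum_good_time_weights[OF _ \<epsilon> less_imp_le[OF \<epsilon>'] scale] in \<open>simp add: w_def out_def\<close>)
    also have "\<dots> \<le> (\<Sum>v<N. 3 * \<epsilon>') + (\<Sum>v<N. if N < v + K then I else 0)
        - \<epsilon> / 2 * (\<Sum>v<N. \<mu> (N - v))"
      unfolding integral_w sum_distrib_left sum_subtractf[symmetric] sum.distrib[symmetric]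
      using K j by (intro sum_mono) auto
    also have "\<dots> \<le> real N * (3 * \<epsilon>') + real K * I - \<epsilon> / 2 * (\<Sum>n<N. \<mu> n)"
      using sum_lessThan_tail_le[OF I, of N K] reverse by simp
    finally have "\<epsilon> / 2 * (\<Sum>n<N. \<mu> n) \<le> real N * (3 * \<epsilon>') + real K * I" by simp
    then have "(\<Sum>n<N. \<mu> n) \<le> \<rho> * real N / 2 + 2 * real K * I / \<epsilon>"
      using \<epsilon> by (simp add: \<epsilon>'_def field_simps)
    moreover have "0 \<le> \<rho> * real N" using \<rho> by simp
    ultimately show ?thesis by linarith
  qed
  then show ?thesis unfolding \<mu>_def by blast
qed

lemma common_good_times:
  assumes \<rho>: "\<rho> > 0"
  shows "\<exists>Ls. \<exists>V\<in>sets M. 1 - 2 * \<rho> \<le> measure M V \<and>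
      (\<forall>x\<in>V. \<forall>k m. \<exists>n\<ge>m. \<forall>j\<le>k. x \<in> good_time_set (Ls j) (1 / (real j + 1)) n)"
proof -
  define \<epsilon> where "\<epsilon> j = 1 / (real j + 1)" for j :: nat
  define bad where "bad L j n = space M - good_time_set L (\<epsilon> j) n" for L j n
  have "\<forall>j. \<exists>L B. \<forall>N. (\<Sum>n<N. measure M (bad L j n)) \<le> \<rho> / 2 ^ Suc j * real N + B"
  proof
    fix j
    show "\<exists>L B. \<forall>N. (\<Sum>n<N. measure M (bad L j n)) \<le> \<rho> / 2 ^ Suc j * real N + B"
      unfolding bad_def using \<rho> by (intro good_time_density) (auto simp: \<epsilon>_def)
  qed
  then obtain Ls where "\<forall>j. \<exists>B. \<forall>N. (\<Sum>n<N. measure M (bad (Ls j) j n)) \<le> \<rho> / 2 ^ Suc j * real N + B"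
    by metis
  then obtain Bs where density:
    "\<And>j N. (\<Sum>n<N. measure M (bad (Ls j) j n)) \<le> \<rho> / 2 ^ Suc j * real N + Bs j"
    by metis
  define A where "A k n = (\<Inter>j\<in>{..k}. good_time_set (Ls j) (\<epsilon> j) n)" for k n
  have A[measurable]: "A k n \<in> sets M" for k n
    unfolding A_def by (intro sets.finite_INT) auto
  have "(\<Sum>n<N. measure M (space M - A k n)) \<le> \<rho> * real N + (\<Sum>j\<le>k. Bs j)" for k N
  proof -
    have "measure M (space M - A k n) \<le> (\<Sum>j\<le>k. measure M (bad (Ls j) j n))" for n
    proof -
      have "space M - A k n = (\<Union>j\<in>{..k}. bad (Ls j) j n)" by (auto simp: A_def bad_def)
      moreover have "measure M (\<Union>j\<in>{..k}. bad (Ls j) j n) \<le> (\<Sum>j\<le>k. measure M (bad (Ls j) j n))"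
        by (intro finite_measure_subadditive_finite) (auto simp: bad_def)
      ultimately show ?thesis by simp
    qed
    then have "(\<Sum>n<N. measure M (space M - A k n)) \<le> (\<Sum>j\<le>k. \<Sum>n<N. measure M (bad (Ls j) j n))"
      by (subst sum.swap) (intro sum_mono)
    also have "\<dots> \<le> (\<Sum>j\<le>k. \<rho> / 2 ^ Suc j * real N + Bs j)"
      by (intro sum_mono density)
    also have "\<dots> = \<rho> * real N * (\<Sum>j\<le>k. 1 / 2 ^ Suc j) + (\<Sum>j\<le>k. Bs j)"
      by (simp add: sum.distrib sum_distrib_left)
    also have "\<dots> \<le> \<rho> * real N + (\<Sum>j\<le>k. Bs j)"
      using sum_inverse_powers_two_le[of k] \<rho> mult_left_mono[of _ 1 "\<rho> * real N"] by simp
    finally show ?thesis .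
  qed
  then have "\<exists>n\<ge>m. 1 - 2 * \<rho> \<le> measure M (A k n)" for k m
    by (rule frequently_prob_ge_of_density[of "A k", OF A \<rho>])
  then have "1 - 2 * \<rho> \<le> measure M (\<Inter>k. \<Inter>m. \<Union>n\<in>{m..}. A k n)"
    by (intro prob_limsup_ge) (auto simp: A_def)
  moreover have "(\<Inter>k. \<Inter>m. \<Union>n\<in>{m..}. A k n) \<in> sets M"
    by (intro sets.countable_INT' sets.countable_UN') auto
  moreover have "\<exists>n\<ge>m. \<forall>j\<le>k. x \<in> good_time_set (Ls j) (1 / (real j + 1)) n"
    if "x \<in> (\<Inter>k. \<Inter>m. \<Union>n\<in>{m..}. A k n)" for x k m
  proof -
    from that obtain n where "n \<ge> m" "x \<in> A k n" by auto
    then show ?thesis by (auto simp: A_def \<epsilon>_def)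
  qed
  ultimately show ?thesis
    by (intro exI[of _ Ls] bexI[of _ "\<Inter>k. \<Inter>m. \<Union>n\<in>{m..}. A k n"] conjI ballI allI)
qed

lemma AE_common_good_times:
  "AE x in M. \<exists>Ls. \<forall>k m. \<exists>n\<ge>m. \<forall>j\<le>k. x \<in> good_time_set (Ls j) (1 / (real j + 1)) n"
proof -
  have "\<forall>p::nat. \<exists>V\<in>sets M. 1 - 1 / (real p + 1) \<le> measure M V \<and> (\<forall>x\<in>V. \<exists>Ls.
      \<forall>k m. \<exists>n\<ge>m. \<forall>j\<le>k. x \<in> good_time_set (Ls j) (1 / (real j + 1)) n)"
  proof
    fix p :: nat
    show "\<exists>V\<in>sets M. 1 - 1 / (real p + 1) \<le> measure M V \<and> (\<forall>x\<in>V. \<exists>Ls.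
      \<forall>k m. \<exists>n\<ge>m. \<forall>j\<le>k. x \<in> good_time_set (Ls j) (1 / (real j + 1)) n)"
    proof -
      have "1 - 2 * (1 / (2 * (real p + 1))) = 1 - 1 / (real p + 1)" by (simp add: field_simps)
      moreover have "1 / (2 * (real p + 1)) > 0" by simp
      ultimately show ?thesis using common_good_times by metis
    qed
  qed
  then obtain V where V: "\<And>p. V p \<in> sets M" "\<And>p. 1 - 1 / (real p + 1) \<le> measure M (V p)"
    and good: "\<And>p x. x \<in> V p \<Longrightarrow> \<exists>Ls.
      \<forall>k m. \<exists>n\<ge>m. \<forall>j\<le>k. x \<in> good_time_set (Ls j) (1 / (real j + 1)) n"
    by metis
  have Z: "(\<Union>p. V p) \<in> sets M" using V by auto
  have lower: "1 - 1 / (real p + 1) \<le> measure M (\<Union>p. V p)" for p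
  proof -
    have "measure M (V p) \<le> measure M (\<Union>p. V p)" by (intro finite_measure_mono Z) auto
    then show ?thesis using V(2)[of p] by linarith
  qed
  have "measure M (\<Union>p. V p) = 1"
  proof (rule ccontr)
    assume "measure M (\<Union>p. V p) \<noteq> 1"
    then have "0 < 1 - measure M (\<Union>p. V p)" using prob_le_1 by (simp add: order_less_le)
    then obtain p :: nat where "1 / (real p + 1) < 1 - measure M (\<Union>p. V p)"
      by (metis nat_approx_posE of_nat_Suc add.commute)
    with lower[of p] show False by linarith
  qed
  then have "AE x in M. x \<in> (\<Union>p. V p)" using Z prob_le_1 by (intro AE_prob_1) auto
  then show ?thesis using good by (auto elim!: eventually_mono)
qed

lemma good_times_error_rate:
  assumes x: "x \<in> C.orbit_subadditive"
    and limsup: "\<And>\<theta>. \<theta> > 0 \<Longrightarrow> \<exists>m. \<forall>n\<ge>m. centered n x \<le> \<theta> * real n"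
    and good: "\<And>k m. \<exists>n\<ge>m. \<forall>j\<le>k. x \<in> good_time_set (Ls j) (1 / (real j + 1)) n"
  shows "\<exists>ni \<delta>. filterlim ni at_top sequentially \<and> (\<forall>l. \<delta> l > 0) \<and> \<delta> \<longlonglongrightarrow> 0 \<and>
    (\<forall>i l. l \<le> ni i \<longrightarrow> \<bar>centered (ni i) x - centered (ni i - l) ((T ^^ l) x)\<bar> \<le> real l * \<delta> l)"
proof -
  obtain ni where ni: "strict_mono ni"
    "\<And>i j. j \<le> i \<Longrightarrow> x \<in> good_time_set (Ls j) (1 / (real j + 1)) (ni i)" "\<And>i. Ls 0 \<le> ni i"
    using obtain_diagonal_times[OF good] by blast
  define e where "e l i = \<bar>centered (ni i) x - centered (ni i - l) ((T ^^ l) x)\<bar>" for l i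
  have upper: "centered (ni i) x - centered (ni i - l) ((T ^^ l) x) \<le> centered l x"
    if "l \<le> ni i" for i l
    using C.orbit_subadditive_le[OF x, of l "ni i - l" 0] that by simp
  have lower: "centered (ni i - l) ((T ^^ l) x) - centered (ni i) x \<le> real l / (real j + 1)"
    if "j \<le> i" "Ls j \<le> l" "l \<le> ni i" for i j l
    using ni(2)[OF that(1)] that(2,3) unfolding good_time_set_def by auto
  have lower_short: "centered (ni i - l) ((T ^^ l) x) - centered (ni i) x
      \<le> \<bar>centered (Ls 0 - l) ((T ^^ l) x)\<bar> + real (Ls 0)" if "l < Ls 0" for i l
    using C.orbit_subadditive_le[OF x, of "Ls 0 - l" "ni i - Ls 0" l] lower[of 0 i "Ls 0"]
      ni(3)[of i] that by simp
  have "\<exists>\<delta>. (\<forall>l. \<delta> l > 0) \<and> \<delta> \<longlonglongrightarrow> 0 \<and> (\<forall>l. \<forall>i\<in>{i. l \<le> ni i}. e l i \<le> real l * \<delta> l)"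
  proof (rule sublinear_error_rate)
    fix l
    define B where "B = \<bar>centered l x\<bar> + \<bar>centered (Ls 0 - l) ((T ^^ l) x)\<bar> + real (Ls 0) + real l"
    have "e l i \<le> B" if i: "l \<le> ni i" for i
    proof -
      have "centered (ni i - l) ((T ^^ l) x) - centered (ni i) x \<le> B"
      proof (cases "l < Ls 0")
        case True
        then show ?thesis using lower_short[OF True, of i] by (simp add: B_def)
      next
        case False
        then show ?thesis using lower[of 0 i l] i by (simp add: B_def)
      qed
      moreover have "centered (ni i) x - centered (ni i - l) ((T ^^ l) x) \<le> B"
        using upper[OF i] by (simp add: B_def)
      ultimately show ?thesis unfolding e_def by linarith
    qed
    then show "\<exists>B. \<forall>i\<in>{i. l \<le> ni i}. e l i \<le> B" by blast
  next
    fix \<eta> :: real assume \<eta>: "\<eta> > 0"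
    then obtain j :: nat where j: "1 / (real j + 1) < \<eta>"
      by (metis nat_approx_posE of_nat_Suc add.commute)
    obtain m where m: "\<forall>n\<ge>m. centered n x \<le> \<eta> * real n" using limsup[OF \<eta>] by blast
    have "e l i \<le> \<eta> * real l" if l: "l \<ge> max (max (Ls j) (Suc (ni j))) m" "l \<le> ni i" for l i
    proof -
      have "ni j < ni i" using l by simp
      then have "j \<le> i" using strict_mono_less[OF ni(1)] by simp
      then have "centered (ni i - l) ((T ^^ l) x) - centered (ni i) x \<le> real l / (real j + 1)"
        using lower l by simp
      also have "\<dots> = 1 / (real j + 1) * real l" by simp
      also have "\<dots> \<le> \<eta> * real l" using j by (intro mult_right_mono) auto
      moreover have "centered (ni i) x - centered (ni i - l) ((T ^^ l) x) \<le> \<eta> * real l"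
        using upper[OF l(2)] m l by force
      ultimately show ?thesis unfolding e_def by linarith
    qed
    then show "\<exists>L. \<forall>l\<ge>L. \<forall>i\<in>{i. l \<le> ni i}. e l i \<le> \<eta> * real l" by blast
  qed (simp add: e_def)
  then show ?thesis using filterlim_subseq[OF ni(1)] unfolding e_def by blast
qed

lemma AE_good_times:
  "AE \<omega> in M. \<exists>ni :: nat \<Rightarrow> nat. \<exists>\<delta> :: nat \<Rightarrow> real.
     filterlim ni at_top sequentially \<and> (\<forall>l. \<delta> l > 0) \<and> \<delta> \<longlonglongrightarrow> 0 \<and>
     (\<forall>i l. l \<le> ni i \<longrightarrow>
        \<bar>a (ni i) \<omega> - a (ni i - l) ((T ^^ l) \<omega>) - A * real l\<bar> \<le> real l * \<delta> l)"
  using AE_common_good_times C.AE_orbit_subadditive centered_limsup_le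
proof eventually_elim
  case (elim x)
  then obtain Ls where "\<forall>k m. \<exists>n\<ge>m. \<forall>j\<le>k. x \<in> good_time_set (Ls j) (1 / (real j + 1)) n"
    by blast
  then obtain ni \<delta> where "filterlim ni at_top sequentially" "\<forall>l. \<delta> l > 0" "\<delta> \<longlonglongrightarrow> 0"
    "\<forall>i l. l \<le> ni i \<longrightarrow> \<bar>centered (ni i) x - centered (ni i - l) ((T ^^ l) x)\<bar> \<le> real l * \<delta> l"
    using good_times_error_rate[of x Ls] elim by blast
  moreover have "centered (ni i) x - centered (ni i - l) ((T ^^ l) x)
      = a (ni i) x - a (ni i - l) ((T ^^ l) x) - A * real l" if "l \<le> ni i" for i l
    using that by (simp add: centered_def of_nat_diff algebra_simps)
  ultimately show ?case by (intro exI[of _ ni] exI[of _ \<delta>]) auto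
qed

end

theorem theorem1p1:
  fixes M :: "'a measure" and T :: "'a \<Rightarrow> 'a" and a :: "nat \<Rightarrow> 'a \<Rightarrow> real" and A :: real
  assumes "prob_space M"
    and "ergodic_mpt M T"
    and "\<And>n. a n \<in> borel_measurable M"
    and "\<And>\<omega>. \<omega> \<in> space M \<Longrightarrow> a 0 \<omega> = 0"
    and "\<And>n m. n > 0 \<Longrightarrow> m > 0 \<Longrightarrow>
           AE \<omega> in M. a (n + m) \<omega> \<le> a n \<omega> + a m ((T ^^ n) \<omega>)"
    and "integrable M (a 1)"
    and "(INF n\<in>{1::nat..}. ext_integral M (a n) / ereal (real n)) = ereal A"
  shows "AE \<omega> in M. \<exists>ni :: nat \<Rightarrow> nat. \<exists>\<delta> :: nat \<Rightarrow> real.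
           filterlim ni at_top sequentially \<and> (\<forall>l. \<delta> l > 0) \<and> \<delta> \<longlonglongrightarrow> 0 \<and>
           (\<forall>i l. l \<le> ni i \<longrightarrow>
              \<bar>a (ni i) \<omega> - a (ni i - l) ((T ^^ l) \<omega>) - A * real l\<bar> \<le> real l * \<delta> l)"
proof -
  interpret integrable_subadditive_cocycle M T a A
  proof -
    interpret prob_space M by (rule assms(1))
    show "integrable_subadditive_cocycle M T a A" by unfold_locales (use assms in auto)
  qed
  show ?thesis by (rule AE_good_times)
qed

end
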